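(* In the setting described in the context (a $k$-player $\alpha$-anchored game, a deterministic strategy for $G^n$, $C=\{m+1,\dots,n\}$, and the random variables $X,Y,Z,\Omega$, event $W$ and quantity $\delta$ defined there), the following hold: (i) $\mathbb{E}_{i\in[m]}\|\mathsf{P}_{X_iY_i\Omega_i|W}-\mathsf{P}_{X_iY_i\Omega_i}\|\le\sqrt{\delta}$; (ii) $\mathbb{E}_{i\in[m]}\|\mathsf{P}_{X_iY_iZ\Omega_{-i}|W}-\mathsf{P}_{X_i|Y_i}\mathsf{P}_{Y_iZ\Omega_{-i}|W}\|\le\sqrt{\delta}$; (iii) $\mathbb{E}_{i\in[m]}\|\mathsf{P}_{Y_iZ\Omega|W}-\mathsf{P}_{Y_i|\Omega_i}\mathsf{P}_{Z\Omega|W}\|\le\sqrt{\delta}$.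
   Context: Let $G=(\mathcal{X},\mathcal{A},\mu,V)$ be a $k$-player game: $\mathcal{X}=\mathcal{X}^1\times\cdots\times\mathcal{X}^k$, $\mathcal{A}=\mathcal{A}^1\times\cdots\times\mathcal{A}^k$ finite, $\mu$ a distribution on $\mathcal{X}$, $V:\mathcal{X}\times\mathcal{A}\to\{0,1\}$. Assume $G$ is $\alpha$-anchored with anchor sets $\mathcal{X}^t_\perp\subseteq\mathcal{X}^t$: the marginal probability that $x^t\in\mathcal{X}^t_\perp$ is at least $\alpha$ for each $t$, and $\mu(x)=\mu(x|_{\overline{F}_x})\prod_{t\in F_x}\mu(x^t)$ for all $x$, where $F_x=\{t:x^t\in\mathcal{X}^t_\perp\}$, $\overline F_x=[k]\setminus F_x$ and $\mu(x|_S)$, $\mu(x^t)$ are marginals. Fix $n$, integers $1\le m<n$, $C=\{m+1,\dots,n\}$, and a deterministic strategy for $G^n$, i.e. functions $f^t:(\mathcal{X}^t)^n\to(\mathcal{A}^t)^n$. Let $X=(X_1,\dots,X_n)$ with $X_i=(X_i^1,\dots,X_i^k)$ be distributed as $\mu^{\otimes n}$, let $(A_1^t,\dots,A_n^t)=f^t(X_1^t,\dots,X_n^t)$, $A_i=(A_i^1,\dots,A_i^k)$, and $Z=(A_j)_{j\in C}$. Let $W$ be the event that $V(X_j,A_j)=1$ for all $j\in C$, assume $\Pr(W)>0$, and set $\delta=\frac{|C|\log|\mathcal{A}|+\log(1/\Pr(W))}{m}$. For each $i,t$ let $Y_i^t=X_i^t$ if $X_i^t\notin\mathcal{X}^t_\perp$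 and $Y_i^t=\perp$ otherwise; $Y_i=(Y_i^1,\dots,Y_i^k)$; $Y_i^{-t}$ is $Y_i$ with coordinate $t$ omitted and $Y_i^S=(Y_i^t)_{t\in S}$. For $i\in[m]$ let $D_i$ be a uniformly random subset of $[k]$ of size $k-1$, the $D_i$ independent of each other and of $X$; let $M_i=Y_i^{D_i}$ and $\Omega_i=(D_i,M_i)$; for $j\in C$ let $\Omega_j=X_j$. Let $\Omega=(\Omega_1,\dots,\Omega_n)$ and $\Omega_{-i}$ be $\Omega$ with $\Omega_i$ omitted. Notation: $\mathsf{P}_U$ is the distribution of $U$, $\mathsf{P}_{U|W}$ and $\mathsf{P}_{U|T}$ denote conditional distributions; a product such as $\mathsf{P}_{U}\mathsf{P}_{T|U'}$ denotes the joint distribution $(u,t)\mapsto\mathsf{P}_U(u)\mathsf{P}_{T|U'=u'}(t)$ where $u'$ is the part of $u$ corresponding to $U'$ (e.g. $\mathsf{P}_{X_i|Y_i}\mathsf{P}_{Y_iZ\Omega_{-i}|W}$ is $(x,y,z,\omega)\mapsto\mathsf{P}_{Y_iZ\Omega_{-i}|W}(y,z,\omega)\mathsf{P}_{X_i|Y_i=y}(x)$). $\|\cdot\|$ is total variation distance, and $\mathbb{E}_{i\in[m]}$ is the uniform average over $i\in[m]$. *)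

theory Defs
  imports "HOL-Probability.Probability"
begin

definition tvd :: "'a pmf \<Rightarrow> 'a pmf \<Rightarrow> real" where
  "tvd p q = infsum (\<lambda>x. \<bar>pmf p x - pmf q x\<bar>) UNIV / 2"

definition cond_distr :: "'w pmf \<Rightarrow> ('w \<Rightarrow> 'u) \<Rightarrow> ('w \<Rightarrow> 't) \<Rightarrow> 't \<Rightarrow> 'u pmf" where
  "cond_distr P U T t = map_pmf U (cond_pmf P {w. T w = t})"

definition anchor_players :: "nat \<Rightarrow> (nat \<Rightarrow> 'x set) \<Rightarrow> (nat \<Rightarrow> 'x) \<Rightarrow> nat set" where
  "anchor_players k Xp x = {t \<in> {..<k}. x t \<in> Xp t}"

(* G = (X, A, mu, V) is alpha-anchored with anchor sets Xp.
   Questions of the k players: x :: nat => 'x with x t \<in> Xs t for t < k. *)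
definition anchored :: "nat \<Rightarrow> (nat \<Rightarrow> 'x set) \<Rightarrow> (nat \<Rightarrow> 'x) pmf \<Rightarrow> real \<Rightarrow> (nat \<Rightarrow> 'x set) \<Rightarrow> bool" where
  "anchored k Xs \<mu> \<alpha> Xp \<longleftrightarrow>
     set_pmf \<mu> \<subseteq> PiE {..<k} Xs \<and>
     (\<forall>t<k. Xp t \<subseteq> Xs t) \<and>
     (\<forall>t<k. \<alpha> \<le> measure_pmf.prob \<mu> {x. x t \<in> Xp t}) \<and>
     (\<forall>x\<in>PiE {..<k} Xs.
        pmf \<mu> x =
          measure_pmf.prob \<mu> {y. \<forall>t\<in>{..<k} - anchor_players k Xp x. y t = x t}
          * (\<Prod>t\<in>anchor_players k Xp x. measure_pmf.prob \<mu> {y. y t = x t}))"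

(* Sample space: w = (X, D), X i = i-th question tuple (i < n), D i = random (k-1)-subset of
   players (i < m).  Rounds are indexed 0..n-1; [m] = {0..<m}, C = {m..<n}. *)
definition sample :: "nat \<Rightarrow> nat \<Rightarrow> nat \<Rightarrow> (nat \<Rightarrow> 'x) pmf
    \<Rightarrow> ((nat \<Rightarrow> nat \<Rightarrow> 'x) \<times> (nat \<Rightarrow> nat set)) pmf" where
  "sample k n m \<mu> = pair_pmf (Pi_pmf {..<n} undefined (\<lambda>_. \<mu>))
      (Pi_pmf {..<m} undefined (\<lambda>_. pmf_of_set {S. S \<subseteq> {..<k} \<and> card S = k - 1}))"

type_synonym ('x) sample_pt = "(nat \<Rightarrow> nat \<Rightarrow> 'x) \<times> (nat \<Rightarrow> nat set)"

definition Xv :: "'x sample_pt \<Rightarrow> nat \<Rightarrow> (nat \<Rightarrow> 'x)" where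
  "Xv w i = fst w i"

(* Y_i^t = X_i^t if X_i^t not in the anchor set, else \<bottom> (= None) *)
definition Yv :: "nat \<Rightarrow> (nat \<Rightarrow> 'x set) \<Rightarrow> 'x sample_pt \<Rightarrow> nat \<Rightarrow> (nat \<Rightarrow> 'x option)" where
  "Yv k Xp w i = (\<lambda>t. if t < k then (if fst w i t \<in> Xp t then None else Some (fst w i t)) else None)"

(* A_j: answers in round j, player t answers f t (X_1^t,...,X_n^t) at position j *)
definition Av :: "nat \<Rightarrow> (nat \<Rightarrow> (nat \<Rightarrow> 'x) \<Rightarrow> (nat \<Rightarrow> 'a)) \<Rightarrow> 'x sample_pt \<Rightarrow> nat \<Rightarrow> (nat \<Rightarrow> 'a)" where
  "Av k f w j = (\<lambda>t. if t < k then f t (\<lambda>i. fst w i t) j else undefined)"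

definition Zv :: "nat \<Rightarrow> (nat \<Rightarrow> (nat \<Rightarrow> 'x) \<Rightarrow> (nat \<Rightarrow> 'a)) \<Rightarrow> nat \<Rightarrow> nat \<Rightarrow> 'x sample_pt \<Rightarrow> (nat \<Rightarrow> nat \<Rightarrow> 'a)" where
  "Zv k f m n w = restrict (Av k f w) {m..<n}"

definition Omv :: "nat \<Rightarrow> (nat \<Rightarrow> 'x set) \<Rightarrow> nat \<Rightarrow> nat \<Rightarrow> 'x sample_pt \<Rightarrow> nat
    \<Rightarrow> (nat set \<times> (nat \<Rightarrow> 'x option)) + (nat \<Rightarrow> 'x)" where
  "Omv k Xp m n w i =
     (if i < m then Inl (snd w i, restrict (Yv k Xp w i) (snd w i))
      else if i < n then Inr (fst w i) else undefined)"

definition Omv_minus :: "nat \<Rightarrow> (nat \<Rightarrow> 'x set) \<Rightarrow> nat \<Rightarrow> nat \<Rightarrow> nat \<Rightarrow> 'x sample_pt \<Rightarrow> nat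
    \<Rightarrow> (nat set \<times> (nat \<Rightarrow> 'x option)) + (nat \<Rightarrow> 'x)" where
  "Omv_minus k Xp m n i w = (\<lambda>j. if j = i then undefined else Omv k Xp m n w j)"

definition Win :: "nat \<Rightarrow> (nat \<Rightarrow> (nat \<Rightarrow> 'x) \<Rightarrow> (nat \<Rightarrow> 'a)) \<Rightarrow> ((nat \<Rightarrow> 'x) \<Rightarrow> (nat \<Rightarrow> 'a) \<Rightarrow> bool)
    \<Rightarrow> nat \<Rightarrow> nat \<Rightarrow> 'x sample_pt set" where
  "Win k f V m n = {w. \<forall>j\<in>{m..<n}. V (fst w j) (Av k f w j)}"

end

theory Submission
  imports Defs
begin

text \<open>
  Each bound compares, for suitable \<open>T\<close> and \<open>U = (U i)_{i<m}\<close> such that before conditioning on \<open>W\<close>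
  the \<open>U i\<close> are independent given \<open>T\<close> with laws \<open>\<kappa> i\<close>, the law of \<open>(U i, T, Z)\<close> given \<open>W\<close> with the
  law of \<open>(T, Z)\<close> given \<open>W\<close> followed by \<open>\<kappa> i\<close>. With \<open>r i\<close> the likelihood ratios,
  \<open>\<Sum>i. ln (r i) = ln g - ln q\<close>, where \<open>g\<close> is at most the density of the product of the conditional
  laws of the \<open>U i\<close> given \<open>(T, Z, W)\<close>, so \<open>E[g | W] \<le> 1\<close>, and \<open>E[1 / q | W] \<le> |range Z| / Pr W\<close>.
  Two applications of \<open>ln x \<le> x - 1\<close> bound the sum of the divergences by \<open>ln (|A|^|C| / Pr W) \<le> m \<delta>\<close>;
  Pinsker's inequality and Cauchy-Schwarz turn this into the averaged bounds.
\<close>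

no_notation Infinite_Sum.abs_summable_on (infixr \<open>abs'_summable'_on\<close> 46)
  \<comment> \<open>the summability notion of \<open>infsetsum\<close> (Infinite_Set_Sum) is meant throughout\<close>

subsection \<open>Total variation distance\<close>

lemma abs_summable_pmf_diff: "(\<lambda>v. pmf A v - pmf B v) abs_summable_on S"
  by (intro abs_summable_on_diff pmf_abs_summable)

lemma abs_summable_pmf_abs_diff: "(\<lambda>v. \<bar>pmf A v - pmf B v\<bar>) abs_summable_on S"
  using abs_summable_on_normI[OF abs_summable_pmf_diff] by simp

lemma tvd_split:
  "tvd A B = (infsetsum (\<lambda>v. \<bar>pmf A v - pmf B v\<bar>) T
              + infsetsum (\<lambda>v. \<bar>pmf A v - pmf B v\<bar>) (-T)) / 2"
proof -
  have "tvd A B = infsetsum (\<lambda>v. \<bar>pmf A v - pmf B v\<bar>) UNIV / 2"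
    unfolding tvd_def using abs_summable_pmf_abs_diff[of A B UNIV] by (simp add: infsetsum_infsum)
  also have "UNIV = T \<union> -T" by simp
  finally show ?thesis
    by (subst (asm) infsetsum_Un_disjoint[OF abs_summable_pmf_abs_diff abs_summable_pmf_abs_diff]) auto
qed

lemma prob_diff_split:
  "measure_pmf.prob A T - measure_pmf.prob B T
     = (infsetsum (\<lambda>v. pmf A v - pmf B v) T + infsetsum (\<lambda>v. pmf B v - pmf A v) (-T)) / 2"
proof -
  have diff: "measure_pmf.prob A S - measure_pmf.prob B S = infsetsum (\<lambda>v. pmf A v - pmf B v) S"
    for A B :: "'a pmf" and S
    by (simp add: measure_pmf_conv_infsetsum infsetsum_diff[OF pmf_abs_summable pmf_abs_summable])
  have "measure_pmf.prob B (-T) - measure_pmf.prob A (-T) = measure_pmf.prob A T - measure_pmf.prob B T"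
    using measure_pmf.prob_compl[of T A] measure_pmf.prob_compl[of T B]
    by (simp add: Compl_eq_Diff_UNIV)
  then show ?thesis using diff[of A T B] diff[of B "-T" A] by (simp add: field_simps)
qed

lemma tvd_ge_prob_diff: "measure_pmf.prob A T - measure_pmf.prob B T \<le> tvd A B"
proof -
  have "infsetsum (\<lambda>v. pmf A v - pmf B v) T \<le> infsetsum (\<lambda>v. \<bar>pmf A v - pmf B v\<bar>) T"
    by (rule infsetsum_mono[OF abs_summable_pmf_diff abs_summable_pmf_abs_diff]) auto
  moreover have "infsetsum (\<lambda>v. pmf B v - pmf A v) (-T) \<le> infsetsum (\<lambda>v. \<bar>pmf A v - pmf B v\<bar>) (-T)"
    by (rule infsetsum_mono[OF abs_summable_pmf_diff abs_summable_pmf_abs_diff]) auto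
  ultimately show ?thesis unfolding prob_diff_split tvd_split[of A B T] by (simp add: divide_right_mono)
qed

lemma tvd_eq_prob_diff: "\<exists>T. tvd A B = measure_pmf.prob A T - measure_pmf.prob B T"
proof
  let ?T = "{v. pmf A v > pmf B v}"
  have "infsetsum (\<lambda>v. pmf A v - pmf B v) ?T = infsetsum (\<lambda>v. \<bar>pmf A v - pmf B v\<bar>) ?T"
    by (rule infsetsum_cong) auto
  moreover have "infsetsum (\<lambda>v. pmf B v - pmf A v) (-?T) = infsetsum (\<lambda>v. \<bar>pmf A v - pmf B v\<bar>) (-?T)"
    by (rule infsetsum_cong) auto
  ultimately show "tvd A B = measure_pmf.prob A ?T - measure_pmf.prob B ?T"
    unfolding prob_diff_split tvd_split[of A B ?T] by simp
qed

lemma tvd_nonneg: "0 \<le> tvd A B"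
  using tvd_ge_prob_diff[of A "{}" B] by simp

lemma tvd_map_pmf_le: "tvd (map_pmf g A) (map_pmf g B) \<le> tvd A B"
proof -
  obtain T where "tvd (map_pmf g A) (map_pmf g B)
                    = measure_pmf.prob (map_pmf g A) T - measure_pmf.prob (map_pmf g B) T"
    using tvd_eq_prob_diff by blast
  also have "\<dots> = measure_pmf.prob A (g -` T) - measure_pmf.prob B (g -` T)" by simp
  also have "\<dots> \<le> tvd A B" by (rule tvd_ge_prob_diff)
  finally show ?thesis .
qed

subsection \<open>Bhattacharyya coefficient and Pinsker's inequality\<close>

definition bhattacharyya :: "'a pmf \<Rightarrow> 'a pmf \<Rightarrow> real" where
  "bhattacharyya A B = infsetsum (\<lambda>v. sqrt (pmf A v * pmf B v)) UNIV"

lemma abs_summable_sqrt_pmf_mult: "(\<lambda>v. sqrt (pmf A v * pmf B v)) abs_summable_on S"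
proof (rule abs_summable_on_comparison_test')
  show "(\<lambda>v. pmf A v + pmf B v) abs_summable_on S"
    by (intro abs_summable_on_add pmf_abs_summable)
  show "norm (sqrt (pmf A v * pmf B v)) \<le> pmf A v + pmf B v" for v
  proof -
    have s: "0 \<le> sqrt (pmf A v * pmf B v)" by simp
    then show ?thesis
      using arith_geo_mean_sqrt[OF pmf_nonneg pmf_nonneg, of A v B v] pmf_nonneg[of A v] pmf_nonneg[of B v]
      unfolding real_norm_def abs_of_nonneg[OF s] by argo
  qed
qed

lemma infsetsum_pmf_UNIV: "infsetsum (pmf A) UNIV = 1"
  by (simp add: infsetsum_pmf_eq_1)

lemma bhattacharyya_nonneg: "0 \<le> bhattacharyya A B"
  unfolding bhattacharyya_def by (rule infsetsum_nonneg) auto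

lemma bhattacharyya_le_1: "bhattacharyya A B \<le> 1"
proof -
  have "2 * bhattacharyya A B = infsetsum (\<lambda>v. 2 * sqrt (pmf A v * pmf B v)) UNIV"
    by (simp add: bhattacharyya_def infsetsum_cmult_right abs_summable_sqrt_pmf_mult)
  also have "\<dots> \<le> infsetsum (\<lambda>v. pmf A v + pmf B v) UNIV"
    using arith_geo_mean_sqrt[OF pmf_nonneg pmf_nonneg]
    by (intro infsetsum_mono abs_summable_on_cmult_right abs_summable_sqrt_pmf_mult
          abs_summable_on_add pmf_abs_summable) (simp add: field_simps)
  also have "\<dots> = 2"
    by (simp add: infsetsum_add pmf_abs_summable infsetsum_pmf_UNIV)
  finally show ?thesis by simp
qed

text \<open>Weighted AM-GM applied to \<open>\<bar>a - b\<bar> = \<bar>\<surd>a - \<surd>b\<bar> (\<surd>a + \<surd>b)\<close>.\<close>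
lemma abs_diff_le_sqrt_terms:
  fixes a b lam :: real assumes "0 \<le> a" "0 \<le> b" "0 < lam"
  shows "\<bar>a - b\<bar> \<le> lam / 2 * (a + b - 2 * sqrt (a * b)) + (a + b + 2 * sqrt (a * b)) / (2 * lam)"
proof -
  define x y where "x = sqrt a" and "y = sqrt b"
  have xy: "0 \<le> x" "0 \<le> y" "x\<^sup>2 = a" "y\<^sup>2 = b" "sqrt (a * b) = x * y"
    using assms by (auto simp: x_def y_def real_sqrt_mult)
  have "a - b = (x - y) * (x + y)"
    by (simp flip: xy(3,4) add: power2_eq_square algebra_simps)
  then have "\<bar>a - b\<bar> = \<bar>x - y\<bar> * (x + y)"
    using xy(1,2) by (simp add: abs_mult)
  also have "\<dots> \<le> (lam * \<bar>x - y\<bar>\<^sup>2 + (x + y)\<^sup>2 / lam) / 2"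
  proof -
    have "(lam * \<bar>x - y\<bar>\<^sup>2 + (x + y)\<^sup>2 / lam) - 2 * (\<bar>x - y\<bar> * (x + y))
            = (lam * \<bar>x - y\<bar> - (x + y))\<^sup>2 / lam"
      using assms(3) by (simp add: field_simps power2_eq_square)
    moreover have "0 \<le> (lam * \<bar>x - y\<bar> - (x + y))\<^sup>2 / lam" using assms(3) by simp
    ultimately show ?thesis by argo
  qed
  also have "\<dots> = lam / 2 * (a + b - 2 * sqrt (a * b)) + (a + b + 2 * sqrt (a * b)) / (2 * lam)"
    using xy assms(3) by (simp add: power2_eq_square field_simps)
  finally show ?thesis .
qed

lemma two_tvd_le_bhattacharyya_bound:
  assumes "0 < lam"
  shows "2 * tvd A B \<le> lam * (1 - bhattacharyya A B) + (1 + bhattacharyya A B) / lam"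
proof -
  define h where "h v = sqrt (pmf A v * pmf B v)" for v
  have sums: "(\<lambda>v. pmf A v + pmf B v - 2 * h v) abs_summable_on UNIV"
             "(\<lambda>v. pmf A v + pmf B v + 2 * h v) abs_summable_on UNIV"
    unfolding h_def by (auto intro!: abs_summable_on_add abs_summable_on_diff
                          abs_summable_on_cmult_right pmf_abs_summable abs_summable_sqrt_pmf_mult)
  have "2 * tvd A B = infsetsum (\<lambda>v. \<bar>pmf A v - pmf B v\<bar>) UNIV"
    unfolding tvd_def using abs_summable_pmf_abs_diff[of A B UNIV] by (simp add: infsetsum_infsum)
  also have "\<dots> \<le> infsetsum (\<lambda>v. lam / 2 * (pmf A v + pmf B v - 2 * h v)
                                 + 1 / (2 * lam) * (pmf A v + pmf B v + 2 * h v)) UNIV"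
    using abs_diff_le_sqrt_terms[OF pmf_nonneg pmf_nonneg assms]
    by (intro infsetsum_mono abs_summable_pmf_abs_diff abs_summable_on_add
          abs_summable_on_cmult_right sums) (simp add: h_def)
  also have "\<dots> = lam / 2 * infsetsum (\<lambda>v. pmf A v + pmf B v - 2 * h v) UNIV
                  + 1 / (2 * lam) * infsetsum (\<lambda>v. pmf A v + pmf B v + 2 * h v) UNIV"
  proof -
    have "(\<lambda>v. lam / 2 * (pmf A v + pmf B v - 2 * h v)) abs_summable_on UNIV"
         "(\<lambda>v. 1 / (2 * lam) * (pmf A v + pmf B v + 2 * h v)) abs_summable_on UNIV"
      by (rule abs_summable_on_cmult_right, rule sums)+
    then show ?thesis
      by (simp only: infsetsum_add infsetsum_cmult_right[where c="lam / 2", OF sums(1)]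
            infsetsum_cmult_right[where c="1 / (2 * lam)", OF sums(2)])
  qed
  also have "infsetsum (\<lambda>v. pmf A v + pmf B v - 2 * h v) UNIV = 2 - 2 * bhattacharyya A B"
    unfolding h_def bhattacharyya_def
    by (simp add: infsetsum_diff[OF abs_summable_on_add[OF pmf_abs_summable pmf_abs_summable]
          abs_summable_on_cmult_right[OF abs_summable_sqrt_pmf_mult]] infsetsum_add[OF pmf_abs_summable pmf_abs_summable]
          infsetsum_cmult_right[OF abs_summable_sqrt_pmf_mult] infsetsum_pmf_UNIV)
  also have "infsetsum (\<lambda>v. pmf A v + pmf B v + 2 * h v) UNIV = 2 + 2 * bhattacharyya A B"
    unfolding h_def bhattacharyya_def
    by (simp add: infsetsum_add[OF abs_summable_on_add[OF pmf_abs_summable pmf_abs_summable]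
          abs_summable_on_cmult_right[OF abs_summable_sqrt_pmf_mult]] infsetsum_add[OF pmf_abs_summable pmf_abs_summable]
          infsetsum_cmult_right[OF abs_summable_sqrt_pmf_mult] infsetsum_pmf_UNIV)
  also have "lam / 2 * (2 - 2 * bhattacharyya A B) + 1 / (2 * lam) * (2 + 2 * bhattacharyya A B)
             = lam * (1 - bhattacharyya A B) + (1 + bhattacharyya A B) / lam"
    using assms by (simp add: field_simps)
  finally show ?thesis .
qed

text \<open>Optimising the scale \<open>lam = \<surd>((1 + \<beta>) / (1 - \<beta>))\<close>.\<close>
lemma square_le_of_scaled_bounds:
  fixes S \<beta> :: real
  assumes "0 \<le> S" "0 \<le> \<beta>" "\<beta> \<le> 1"
    and bound: "\<And>lam. 0 < lam \<Longrightarrow> S \<le> lam * (1 - \<beta>) + (1 + \<beta>) / lam"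
  shows "S\<^sup>2 \<le> 4 * (1 - \<beta>\<^sup>2)"
proof (cases "\<beta> < 1")
  case True
  define lam where "lam = sqrt ((1 + \<beta>) / (1 - \<beta>))"
  have lam: "0 < lam" "lam\<^sup>2 = (1 + \<beta>) / (1 - \<beta>)" using True assms by (auto simp: lam_def)
  have "lam * (1 - \<beta>) = sqrt ((1 + \<beta>) * (1 - \<beta>))"
  proof (rule real_sqrt_unique[symmetric])
    show "(lam * (1 - \<beta>))\<^sup>2 = (1 + \<beta>) * (1 - \<beta>)"
      using True by (subst power_mult_distrib, subst lam(2)) (simp add: power2_eq_square field_simps)
  qed (use True lam in simp)
  moreover have "(1 + \<beta>) / lam = sqrt ((1 + \<beta>) * (1 - \<beta>))"
  proof (rule real_sqrt_unique[symmetric])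
    show "((1 + \<beta>) / lam)\<^sup>2 = (1 + \<beta>) * (1 - \<beta>)"
      using True assms by (subst power_divide, subst lam(2)) (simp add: power2_eq_square field_simps)
  qed (use assms lam in simp)
  ultimately have "S \<le> 2 * sqrt (1 - \<beta>\<^sup>2)"
    using bound[OF lam(1)] by (simp add: power2_eq_square algebra_simps)
  then have "S\<^sup>2 \<le> (2 * sqrt (1 - \<beta>\<^sup>2))\<^sup>2" using assms(1) by (intro power_mono) auto
  also have "\<dots> = 4 * (1 - \<beta>\<^sup>2)" using assms by (simp add: power_mult_distrib power_le_one)
  finally show ?thesis .
next
  case False
  then have "\<beta> = 1" using assms by simp
  have "S = 0"
  proof (rule ccontr)
    assume "S \<noteq> 0"
    then have "0 < S" using assms(1) by simp
    then show False using bound[of "4 / S"] \<open>\<beta> = 1\<close> by simp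
  qed
  then show ?thesis using \<open>\<beta> = 1\<close> by simp
qed

lemma tvd_sq_le_bhattacharyya: "(tvd A B)\<^sup>2 \<le> 1 - (bhattacharyya A B)\<^sup>2"
proof -
  have "(2 * tvd A B)\<^sup>2 \<le> 4 * (1 - (bhattacharyya A B)\<^sup>2)"
    by (rule square_le_of_scaled_bounds)
       (auto simp: tvd_nonneg bhattacharyya_nonneg bhattacharyya_le_1 two_tvd_le_bhattacharyya_bound)
  then show ?thesis by (simp add: power_mult_distrib)
qed

lemma integrable_pmf_iff:
  fixes f :: "'a \<Rightarrow> real"
  shows "integrable (measure_pmf p) f \<longleftrightarrow> (\<lambda>x. pmf p x * f x) abs_summable_on UNIV"
  unfolding measure_pmf_eq_density abs_summable_on_def
  by (subst integrable_density) (auto simp: pmf_nonneg)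

lemma bhattacharyya_pos:
  assumes "v \<in> set_pmf A" "v \<in> set_pmf B"
  shows "0 < bhattacharyya A B"
proof -
  have "0 < sqrt (pmf A v * pmf B v)" using assms by (simp add: pmf_positive)
  also have "\<dots> = infsetsum (\<lambda>v. sqrt (pmf A v * pmf B v)) {v}" by simp
  also have "\<dots> \<le> bhattacharyya A B" unfolding bhattacharyya_def
    by (rule infsetsum_mono_neutral_left[OF _ abs_summable_sqrt_pmf_mult]) auto
  finally show ?thesis .
qed

lemma pmf_mult_sqrt_ratio: "pmf A v * sqrt (pmf B v / pmf A v) = sqrt (pmf A v * pmf B v)"
proof (cases "pmf A v = 0")
  case False
  then have "0 < pmf A v" using pmf_nonneg[of A v] by linarith
  then have "pmf A v * sqrt (pmf B v / pmf A v) = sqrt ((pmf A v)\<^sup>2) * sqrt (pmf B v / pmf A v)"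
    by simp
  also have "\<dots> = sqrt ((pmf A v)\<^sup>2 * (pmf B v / pmf A v))"
    by (rule real_sqrt_mult[symmetric])
  also have "(pmf A v)\<^sup>2 * (pmf B v / pmf A v) = pmf A v * pmf B v"
    using \<open>0 < pmf A v\<close> by (simp add: power2_eq_square)
  finally show ?thesis .
qed simp

text \<open>Tangent-line bound for \<open>ln\<close> at the point \<open>\<beta>\<close>, in terms of \<open>s = \<surd>(b / a)\<close>.\<close>
lemma ln_ratio_ge_sqrt_bound:
  fixes a b \<beta> :: real assumes "0 < a" "0 < b" "0 < \<beta>"
  shows "- 2 * ln \<beta> - 2 / \<beta> * sqrt (b / a) + 2 \<le> ln (a / b)"
proof -
  define s where "s = sqrt (b / a)"
  have "0 < s" using assms by (simp add: s_def)
  have "ln (a / b) = - 2 * ln s"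
    using assms by (simp add: s_def ln_sqrt ln_div)
  moreover have "ln (s / \<beta>) \<le> s / \<beta> - 1" using \<open>0 < s\<close> assms(3) by (intro ln_le_minus_one) simp
  moreover have "ln (s / \<beta>) = ln s - ln \<beta>" using \<open>0 < s\<close> assms(3) by (simp add: ln_div)
  moreover have "2 / \<beta> * s = 2 * (s / \<beta>)" by simp
  ultimately show ?thesis unfolding s_def[symmetric] by linarith
qed

text \<open>Pinsker's inequality (divergence in nats), via the Bhattacharyya coefficient.\<close>
lemma tvd_sq_le_kl:
  assumes pos: "\<And>v. v \<in> set_pmf A \<Longrightarrow> 0 < pmf B v"
    and int: "integrable A (\<lambda>v. ln (pmf A v / pmf B v))"
  shows "(tvd A B)\<^sup>2 \<le> (\<integral>v. ln (pmf A v / pmf B v) \<partial>A)"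
proof -
  define \<beta> where "\<beta> = bhattacharyya A B"
  define s where "s v = sqrt (pmf B v / pmf A v)" for v
  have int_s: "integrable A s"
    unfolding integrable_pmf_iff s_def pmf_mult_sqrt_ratio by (rule abs_summable_sqrt_pmf_mult)
  have E_s: "(\<integral>v. s v \<partial>A) = \<beta>"
    unfolding pmf_expectation_eq_infsetsum s_def pmf_mult_sqrt_ratio \<beta>_def bhattacharyya_def ..
  obtain v where "v \<in> set_pmf A" using set_pmf_not_empty[of A] by blast
  then have "0 < \<beta>"
    unfolding \<beta>_def using pos[of v] by (intro bhattacharyya_pos) (auto simp: set_pmf_eq)
  have "(tvd A B)\<^sup>2 \<le> 1 - \<beta>\<^sup>2" unfolding \<beta>_def by (rule tvd_sq_le_bhattacharyya)
  also have "\<dots> \<le> - 2 * ln \<beta>"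
    using ln_le_minus_one[of "\<beta>\<^sup>2"] \<open>0 < \<beta>\<close> by (simp add: ln_realpow)
  also have "\<dots> = (\<integral>v. - 2 * ln \<beta> - 2 / \<beta> * s v + 2 \<partial>A)"
    using int_s E_s \<open>0 < \<beta>\<close> by (simp add: integral_diff integral_add)
  also have "\<dots> \<le> (\<integral>v. ln (pmf A v / pmf B v) \<partial>A)"
  proof (rule integral_mono_AE[OF _ int AE_pmfI])
    show "integrable A (\<lambda>v. - 2 * ln \<beta> - 2 / \<beta> * s v + 2)" using int_s by simp
    show "- 2 * ln \<beta> - 2 / \<beta> * s v + 2 \<le> ln (pmf A v / pmf B v)" if "v \<in> set_pmf A" for v
      unfolding s_def using that pos[OF that] \<open>0 < \<beta>\<close>
      by (intro ln_ratio_ge_sqrt_bound) (simp_all add: pmf_positive)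
  qed
  finally show ?thesis .
qed

subsection \<open>Conditioning discrete distributions\<close>

lemma measure_cond_pmf:
  assumes "0 < measure_pmf.prob Q E"
  shows "measure_pmf.prob (cond_pmf Q E) S = measure_pmf.prob Q (S \<inter> E) / measure_pmf.prob Q E"
proof -
  have "set_pmf Q \<inter> E \<noteq> {}" using assms measure_pmf_zero_iff[of Q E] by auto
  moreover have "emeasure (measure_pmf Q) E \<noteq> 0"
    using assms by (simp add: measure_pmf.emeasure_eq_measure)
  ultimately show ?thesis
    by (simp add: cond_pmf.rep_eq Int_commute measure_pmf.emeasure_eq_measure)
qed

lemma set_cond_pmf_eq:
  assumes "0 < measure_pmf.prob Q E"
  shows "set_pmf (cond_pmf Q E) = set_pmf Q \<inter> E"
  using assms measure_pmf_zero_iff[of Q E] by auto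

lemma pmf_cond_distr:
  assumes "0 < measure_pmf.prob Q {w. G w = o'}"
  shows "pmf (cond_distr Q F G o') v
           = measure_pmf.prob Q {w. F w = v \<and> G w = o'} / measure_pmf.prob Q {w. G w = o'}"
proof -
  have "pmf (cond_distr Q F G o') v = measure_pmf.prob (cond_pmf Q {w. G w = o'}) (F -` {v})"
    by (simp add: cond_distr_def pmf_map)
  also have "\<dots> = measure_pmf.prob Q (F -` {v} \<inter> {w. G w = o'}) / measure_pmf.prob Q {w. G w = o'}"
    by (rule measure_cond_pmf[OF assms])
  also have "F -` {v} \<inter> {w. G w = o'} = {w. F w = v \<and> G w = o'}" by auto
  finally show ?thesis .
qed

lemma measure_pmf_pos_of_mem:
  assumes "\<omega> \<in> set_pmf M" "\<omega> \<in> S"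
  shows "0 < measure_pmf.prob M S"
proof -
  have "pmf M \<omega> = measure_pmf.prob M {\<omega>}" by (simp add: measure_pmf_single)
  also have "\<dots> \<le> measure_pmf.prob M S" using assms by (intro measure_pmf.finite_measure_mono) auto
  finally show ?thesis using assms(1) pmf_positive[of \<omega> M] by linarith
qed

lemma pmf_bind_map_inj:
  assumes inj: "\<And>x u x' u'. f x u = f x' u' \<Longrightarrow> x = x' \<and> u = u'"
  shows "pmf (bind_pmf M (\<lambda>x. map_pmf (f x) (K x))) (f x0 u0) = pmf M x0 * pmf (K x0) u0"
proof -
  have pmf_map_f: "pmf (map_pmf (f x) (K x)) (f x0 u0) = (if x = x0 then pmf (K x0) u0 else 0)" for x
  proof (cases "x = x0")
    case True
    have "inj (f x)" using inj by (auto intro: injI)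
    then show ?thesis using True by (simp add: pmf_map_inj')
  next
    case False
    then have "f x -` {f x0 u0} = {}" using inj by auto
    then show ?thesis using False by (simp add: pmf_map)
  qed
  have "pmf (bind_pmf M (\<lambda>x. map_pmf (f x) (K x))) (f x0 u0)
          = (\<integral>x. (if x = x0 then pmf (K x0) u0 else 0) \<partial>M)"
    by (simp add: pmf_bind pmf_map_f)
  also have "\<dots> = pmf M x0 * pmf (K x0) u0"
    by (subst integral_measure_pmf_real[where A="{x0}"]) (auto split: if_splits)
  finally show ?thesis .
qed

lemma nn_integral_pmf_UNIV: "(\<integral>\<^sup>+ x. ennreal (pmf p x) \<partial>count_space UNIV) = 1"
  by (simp add: nn_integral_pmf)

lemma integral_le_of_nn_integral_le:
  fixes f :: "'a \<Rightarrow> real" and M :: "'a pmf"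
  assumes nonneg: "AE x in M. 0 \<le> f x" and le: "(\<integral>\<^sup>+ x. ennreal (f x) \<partial>M) \<le> ennreal c"
    and "0 \<le> c"
  shows "integrable M f" "(\<integral>x. f x \<partial>M) \<le> c"
proof -
  have "(\<integral>\<^sup>+ x. ennreal (f x) \<partial>M) < \<infinity>" using le by (simp add: le_less_trans)
  then show int: "integrable M f" by (intro integrableI_nonneg nonneg) auto
  have "ennreal (\<integral>x. f x \<partial>M) = (\<integral>\<^sup>+ x. ennreal (f x) \<partial>M)"
    by (rule nn_integral_eq_integral[OF int nonneg, symmetric])
  with le have "ennreal (\<integral>x. f x \<partial>M) \<le> ennreal c" by simp
  with \<open>0 \<le> c\<close> show "(\<integral>x. f x \<partial>M) \<le> c" by simp
qed

subsection \<open>A chain-rule bound for conditioned samples\<close>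

text \<open>\<open>cond_indep\<close> says that under \<open>Q\<close> the \<open>U i\<close>, \<open>i < m\<close>, are conditionally independent given \<open>T\<close>
  with laws \<open>\<kappa> i\<close>; only this upper bound is needed.\<close>
locale kl_chain =
  fixes Q :: "'w pmf" and E :: "'w set" and T :: "'w \<Rightarrow> 't" and Z :: "'w \<Rightarrow> 'z"
    and U :: "'w \<Rightarrow> nat \<Rightarrow> 'u" and \<kappa> :: "nat \<Rightarrow> 't \<Rightarrow> 'u pmf" and Zs :: "'z set" and m :: nat
  assumes prob_E_pos: "0 < measure_pmf.prob Q E"
    and finite_Zs: "finite Zs"
    and Z_in_Zs: "\<And>\<omega>. \<omega> \<in> set_pmf Q \<Longrightarrow> \<omega> \<in> E \<Longrightarrow> Z \<omega> \<in> Zs"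
    and U_undefined: "\<And>\<omega> i. m \<le> i \<Longrightarrow> U \<omega> i = undefined"
    and cond_indep: "\<And>t u. measure_pmf.prob Q {\<omega>. T \<omega> = t \<and> U \<omega> = u}
                        \<le> measure_pmf.prob Q {\<omega>. T \<omega> = t} * (\<Prod>i<m. pmf (\<kappa> i t) (u i))"
begin

abbreviation P :: "'w pmf" where "P \<equiv> cond_pmf Q E"
abbreviation pE :: real where "pE \<equiv> measure_pmf.prob Q E"
abbreviation pT :: "'t \<Rightarrow> real" where "pT t \<equiv> measure_pmf.prob Q {\<omega>. T \<omega> = t}"

definition joint_TZ :: "('t \<times> 'z) pmf" where
  "joint_TZ = map_pmf (\<lambda>\<omega>. (T \<omega>, Z \<omega>)) P"

definition law :: "nat \<Rightarrow> ('u \<times> 't \<times> 'z) pmf" where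
  "law i = map_pmf (\<lambda>\<omega>. (U \<omega> i, T \<omega>, Z \<omega>)) P"

definition kernel_law :: "nat \<Rightarrow> ('u \<times> 't \<times> 'z) pmf" where
  "kernel_law i = bind_pmf joint_TZ (\<lambda>(t, z). map_pmf (\<lambda>u. (u, t, z)) (\<kappa> i t))"

definition ratio :: "nat \<Rightarrow> 'u \<times> 't \<times> 'z \<Rightarrow> real" where
  "ratio i v = pmf (law i) v / pmf (kernel_law i) v"

definition weight :: "'t \<Rightarrow> 'z \<Rightarrow> real" where
  "weight t z = pmf joint_TZ (t, z) * pE / pT t"

definition joint_ratio :: "'t \<times> 'z \<times> (nat \<Rightarrow> 'u) \<Rightarrow> real" where
  "joint_ratio = (\<lambda>(t, z, u). (\<Prod>i<m. ratio i (u i, t, z)) * weight t z)"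

definition zs_factor :: real where
  "zs_factor = card Zs / pE"

lemma prob_P: "measure_pmf.prob P S = measure_pmf.prob Q (S \<inter> E) / pE"
  by (rule measure_cond_pmf[OF prob_E_pos])

lemma set_pmf_P: "set_pmf P = set_pmf Q \<inter> E"
  by (rule set_cond_pmf_eq[OF prob_E_pos])

lemma pmf_kernel_law: "pmf (kernel_law i) (u, t, z) = pmf joint_TZ (t, z) * pmf (\<kappa> i t) u"
proof -
  have "kernel_law i = bind_pmf joint_TZ (\<lambda>x. map_pmf (\<lambda>u. (u, fst x, snd x)) (\<kappa> i (fst x)))"
    unfolding kernel_law_def by (simp add: case_prod_unfold)
  then show ?thesis
    using pmf_bind_map_inj[of "\<lambda>x u. (u, fst x, snd x)" joint_TZ "\<lambda>x. \<kappa> i (fst x)" "(t, z)" u]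
    by auto
qed

lemma support_pos:
  assumes "\<omega> \<in> set_pmf P"
  shows joint_TZ_pos: "0 < pmf joint_TZ (T \<omega>, Z \<omega>)"
    and law_pos: "0 < pmf (law i) (U \<omega> i, T \<omega>, Z \<omega>)"
    and pT_pos: "0 < pT (T \<omega>)"
    and kernel_pos: "i < m \<Longrightarrow> 0 < pmf (\<kappa> i (T \<omega>)) (U \<omega> i)"
proof -
  have \<omega>: "\<omega> \<in> set_pmf Q" using assms set_pmf_P by auto
  show "0 < pmf joint_TZ (T \<omega>, Z \<omega>)"
    unfolding joint_TZ_def pmf_map by (rule measure_pmf_pos_of_mem[OF assms]) simp
  show "0 < pmf (law i) (U \<omega> i, T \<omega>, Z \<omega>)"
    unfolding law_def pmf_map by (rule measure_pmf_pos_of_mem[OF assms]) simp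
  show "0 < pT (T \<omega>)" by (rule measure_pmf_pos_of_mem[OF \<omega>]) simp
  assume "i < m"
  have "0 < measure_pmf.prob Q {\<omega>'. T \<omega>' = T \<omega> \<and> U \<omega>' = U \<omega>}"
    by (rule measure_pmf_pos_of_mem[OF \<omega>]) simp
  also have "\<dots> \<le> pT (T \<omega>) * (\<Prod>j<m. pmf (\<kappa> j (T \<omega>)) (U \<omega> j))" by (rule cond_indep)
  finally have "(\<Prod>j<m. pmf (\<kappa> j (T \<omega>)) (U \<omega> j)) \<noteq> 0"
    by (metis mult_zero_right order_less_irrefl)
  then have "pmf (\<kappa> i (T \<omega>)) (U \<omega> i) \<noteq> 0" using \<open>i < m\<close> by auto
  then show "0 < pmf (\<kappa> i (T \<omega>)) (U \<omega> i)" using pmf_nonneg[of "\<kappa> i (T \<omega>)" "U \<omega> i"] by linarith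
qed

lemma ratio_pos: "\<omega> \<in> set_pmf P \<Longrightarrow> i < m \<Longrightarrow> 0 < ratio i (U \<omega> i, T \<omega>, Z \<omega>)"
  by (simp add: ratio_def pmf_kernel_law law_pos joint_TZ_pos kernel_pos)

lemma weight_pos: "\<omega> \<in> set_pmf P \<Longrightarrow> 0 < weight (T \<omega>) (Z \<omega>)"
  using prob_E_pos by (simp add: weight_def joint_TZ_pos pT_pos)

lemma joint_ratio_pos: "\<omega> \<in> set_pmf P \<Longrightarrow> 0 < joint_ratio (T \<omega>, Z \<omega>, U \<omega>)"
  using ratio_pos weight_pos by (auto simp: joint_ratio_def intro!: mult_pos_pos prod_pos)

lemma zs_factor_ge_1: "1 \<le> zs_factor"
proof -
  obtain \<omega> where "\<omega> \<in> set_pmf P" using set_pmf_not_empty[of P] by blast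
  then have "Z \<omega> \<in> Zs" using Z_in_Zs set_pmf_P by auto
  then have "1 \<le> real (card Zs)" using finite_Zs by (simp add: Suc_le_eq card_gt_0_iff) blast
  moreover have "pE \<le> 1" by simp
  ultimately show ?thesis
    using prob_E_pos unfolding zs_factor_def by (subst le_divide_eq_1_pos) linarith+
qed

lemma nn_integral_inv_ratio: "(\<integral>\<^sup>+\<omega>. ennreal (1 / ratio i (U \<omega> i, T \<omega>, Z \<omega>)) \<partial>P) \<le> 1"
proof -
  have "(\<integral>\<^sup>+\<omega>. ennreal (1 / ratio i (U \<omega> i, T \<omega>, Z \<omega>)) \<partial>P)
          = (\<integral>\<^sup>+v. ennreal (1 / ratio i v) \<partial>law i)"
    by (simp add: law_def)
  also have "\<dots> = (\<integral>\<^sup>+v. ennreal (pmf (law i) v) * ennreal (1 / ratio i v) \<partial>count_space UNIV)"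
    by (rule nn_integral_measure_pmf)
  also have "\<dots> \<le> (\<integral>\<^sup>+v. ennreal (pmf (kernel_law i) v) \<partial>count_space UNIV)"
  proof (rule nn_integral_mono)
    fix v
    have "pmf (law i) v * (1 / ratio i v) \<le> pmf (kernel_law i) v"
      by (cases "pmf (law i) v = 0") (auto simp: ratio_def)
    then show "ennreal (pmf (law i) v) * ennreal (1 / ratio i v) \<le> ennreal (pmf (kernel_law i) v)"
      by (simp add: ennreal_mult'[symmetric] ennreal_leI)
  qed
  also have "\<dots> = 1" by (rule nn_integral_pmf_UNIV)
  finally show ?thesis .
qed

text \<open>Relative to the law of \<open>(T, Z)\<close> given \<open>E\<close>, \<open>1 / weight\<close> is at most \<open>zs_factor\<close> times the
  density of the law of \<open>T\<close> under \<open>Q\<close> paired with the uniform distribution on \<open>Zs\<close>.\<close>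
lemma nn_integral_inv_weight: "(\<integral>\<^sup>+\<omega>. ennreal (1 / weight (T \<omega>) (Z \<omega>)) \<partial>P) \<le> ennreal zs_factor"
proof -
  define R where "R = pair_pmf (map_pmf T Q) (pmf_of_set Zs)"
  have Zs_ne: "Zs \<noteq> {}" using zs_factor_ge_1 by (auto simp: zs_factor_def)
  have "(\<integral>\<^sup>+\<omega>. ennreal (1 / weight (T \<omega>) (Z \<omega>)) \<partial>P)
          = (\<integral>\<^sup>+x. ennreal (1 / weight (fst x) (snd x)) \<partial>joint_TZ)"
    by (simp add: joint_TZ_def)
  also have "\<dots> = (\<integral>\<^sup>+x. ennreal (pmf joint_TZ x) * ennreal (1 / weight (fst x) (snd x)) \<partial>count_space UNIV)"
    by (rule nn_integral_measure_pmf)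
  also have "\<dots> \<le> (\<integral>\<^sup>+x. ennreal zs_factor * ennreal (pmf R x) \<partial>count_space UNIV)"
  proof (rule nn_integral_mono)
    fix x :: "'t \<times> 'z"
    obtain t z where x: "x = (t, z)" by (cases x)
    show "ennreal (pmf joint_TZ x) * ennreal (1 / weight (fst x) (snd x)) \<le> ennreal zs_factor * ennreal (pmf R x)"
    proof (cases "pmf joint_TZ x = 0")
      case False
      then have "x \<in> set_pmf joint_TZ" by (simp add: set_pmf_eq)
      then obtain \<omega> where \<omega>: "\<omega> \<in> set_pmf P" "x = (T \<omega>, Z \<omega>)"
        by (auto simp: joint_TZ_def)
      then have "z \<in> Zs" using Z_in_Zs set_pmf_P x by auto
      have "pmf joint_TZ x * (1 / weight (fst x) (snd x)) = pT t / pE"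
        using joint_TZ_pos[OF \<omega>(1)] \<omega>(2) prob_E_pos x by (simp add: weight_def)
      also have "\<dots> = zs_factor * pmf R x"
        using \<open>z \<in> Zs\<close> finite_Zs Zs_ne x by (simp add: R_def pmf_pair pmf_map vimage_def zs_factor_def)
      finally show ?thesis
        using zs_factor_ge_1 by (simp add: ennreal_mult'[symmetric])
    qed simp
  qed
  also have "\<dots> = ennreal zs_factor" by (simp add: nn_integral_cmult nn_integral_pmf_UNIV)
  finally show ?thesis .
qed

definition triple_law :: "('t \<times> 'z \<times> (nat \<Rightarrow> 'u)) pmf" where
  "triple_law = map_pmf (\<lambda>\<omega>. (T \<omega>, Z \<omega>, U \<omega>)) P"

definition cond_product :: "('t \<times> 'z \<times> (nat \<Rightarrow> 'u)) pmf" where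
  "cond_product = bind_pmf joint_TZ (\<lambda>(t, z). map_pmf (\<lambda>u. (t, z, u))
     (Pi_pmf {..<m} undefined (\<lambda>i. cond_distr P (\<lambda>\<omega>. U \<omega> i) (\<lambda>\<omega>. (T \<omega>, Z \<omega>)) (t, z))))"

lemma pmf_triple_law_le: "pmf triple_law (t, z, u) \<le> pT t * (\<Prod>i<m. pmf (\<kappa> i t) (u i)) / pE"
proof -
  have "pmf triple_law (t, z, u) = measure_pmf.prob Q ({\<omega>. (T \<omega>, Z \<omega>, U \<omega>) = (t, z, u)} \<inter> E) / pE"
    unfolding triple_law_def pmf_map by (subst prob_P) (simp add: vimage_def)
  also have "\<dots> \<le> measure_pmf.prob Q {\<omega>. T \<omega> = t \<and> U \<omega> = u} / pE"
    using prob_E_pos by (intro divide_right_mono measure_pmf.finite_measure_mono) auto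
  also have "\<dots> \<le> pT t * (\<Prod>i<m. pmf (\<kappa> i t) (u i)) / pE"
    using prob_E_pos by (intro divide_right_mono cond_indep) auto
  finally show ?thesis .
qed

lemma pmf_cond_product:
  assumes pos: "0 < pmf joint_TZ (t, z)" and u: "\<And>i. m \<le> i \<Longrightarrow> u i = undefined"
  shows "pmf cond_product (t, z, u)
           = pmf joint_TZ (t, z) * (\<Prod>i<m. pmf (law i) (u i, t, z) / pmf joint_TZ (t, z))"
proof -
  have cond: "pmf (cond_distr P (\<lambda>\<omega>. U \<omega> i) (\<lambda>\<omega>. (T \<omega>, Z \<omega>)) (t, z)) (u i)
                = pmf (law i) (u i, t, z) / pmf joint_TZ (t, z)" for i
  proof -
    have "measure_pmf.prob P {\<omega>. (T \<omega>, Z \<omega>) = (t, z)} = pmf joint_TZ (t, z)"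
      by (simp add: joint_TZ_def pmf_map vimage_def)
    moreover have "{\<omega>. U \<omega> i = u i \<and> (T \<omega>, Z \<omega>) = (t, z)} = (\<lambda>\<omega>. (U \<omega> i, T \<omega>, Z \<omega>)) -` {(u i, t, z)}"
      by auto
    ultimately show ?thesis using pos by (simp add: pmf_cond_distr law_def pmf_map)
  qed
  have "pmf cond_product (t, z, u) = pmf joint_TZ (t, z)
          * pmf (Pi_pmf {..<m} undefined (\<lambda>i. cond_distr P (\<lambda>\<omega>. U \<omega> i) (\<lambda>\<omega>. (T \<omega>, Z \<omega>)) (t, z))) u"
    unfolding cond_product_def case_prod_unfold
    using pmf_bind_map_inj[of "\<lambda>x u. (fst x, snd x, u)" joint_TZ
        "\<lambda>x. Pi_pmf {..<m} undefined (\<lambda>i. cond_distr P (\<lambda>\<omega>. U \<omega> i) (\<lambda>\<omega>. (T \<omega>, Z \<omega>)) x)" "(t, z)" u]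
    by (simp add: prod_eq_iff)
  also have "\<dots> = pmf joint_TZ (t, z) * (\<Prod>i<m. pmf (law i) (u i, t, z) / pmf joint_TZ (t, z))"
    using u by (simp add: pmf_Pi cond)
  finally show ?thesis .
qed

text \<open>This is where the conditional-independence hypothesis enters.\<close>
lemma pmf_triple_law_mult_joint_ratio_le: "pmf triple_law x * joint_ratio x \<le> pmf cond_product x"
proof (cases "pmf triple_law x = 0")
  case False
  then have "x \<in> set_pmf triple_law" by (simp add: set_pmf_eq)
  then obtain \<omega> where \<omega>: "\<omega> \<in> set_pmf P" "x = (T \<omega>, Z \<omega>, U \<omega>)"
    by (auto simp: triple_law_def)
  define t z u where "t = T \<omega>" and "z = Z \<omega>" and "u = U \<omega>"
  have pos: "0 < pT t" "0 < pmf joint_TZ (t, z)" "\<And>i. i < m \<Longrightarrow> 0 < pmf (\<kappa> i t) (u i)"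
    using support_pos[OF \<omega>(1)] by (auto simp: t_def z_def u_def)
  have "0 \<le> joint_ratio x"
    using joint_ratio_pos[OF \<omega>(1)] \<omega>(2) by simp
  then have "pmf triple_law x * joint_ratio x \<le> pT t * (\<Prod>i<m. pmf (\<kappa> i t) (u i)) / pE * joint_ratio x"
    using pmf_triple_law_le \<omega>(2) by (intro mult_right_mono) (auto simp: t_def z_def u_def)
  also have "\<dots> = (\<Prod>i<m. pmf (\<kappa> i t) (u i) * ratio i (u i, t, z)) * pmf joint_TZ (t, z)"
    using pos(1) prob_E_pos \<omega>(2)
    by (simp add: joint_ratio_def weight_def prod.distrib t_def z_def u_def)
  also have "(\<Prod>i<m. pmf (\<kappa> i t) (u i) * ratio i (u i, t, z))
               = (\<Prod>i<m. pmf (law i) (u i, t, z) / pmf joint_TZ (t, z))"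
  proof (rule prod.cong)
    fix i assume "i \<in> {..<m}"
    then show "pmf (\<kappa> i t) (u i) * ratio i (u i, t, z) = pmf (law i) (u i, t, z) / pmf joint_TZ (t, z)"
      using pos(3)[of i] by (simp add: ratio_def pmf_kernel_law)
  qed simp
  also have "\<dots> * pmf joint_TZ (t, z) = pmf cond_product x"
    using pmf_cond_product[OF pos(2), of u] U_undefined \<omega>(2) by (simp add: u_def t_def z_def)
  finally show ?thesis .
qed simp

lemma nn_integral_joint_ratio: "(\<integral>\<^sup>+\<omega>. ennreal (joint_ratio (T \<omega>, Z \<omega>, U \<omega>)) \<partial>P) \<le> 1"
proof -
  have "(\<integral>\<^sup>+\<omega>. ennreal (joint_ratio (T \<omega>, Z \<omega>, U \<omega>)) \<partial>P) = (\<integral>\<^sup>+x. ennreal (joint_ratio x) \<partial>triple_law)"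
    by (simp add: triple_law_def)
  also have "\<dots> = (\<integral>\<^sup>+x. ennreal (pmf triple_law x) * ennreal (joint_ratio x) \<partial>count_space UNIV)"
    by (rule nn_integral_measure_pmf)
  also have "\<dots> \<le> (\<integral>\<^sup>+x. ennreal (pmf cond_product x) \<partial>count_space UNIV)"
    using pmf_triple_law_mult_joint_ratio_le
    by (intro nn_integral_mono) (simp add: ennreal_mult'[symmetric] ennreal_leI)
  also have "\<dots> = 1" by (rule nn_integral_pmf_UNIV)
  finally show ?thesis .
qed

lemma sum_ln_ratio_le:
  assumes \<omega>: "\<omega> \<in> set_pmf P"
  shows "(\<Sum>i<m. ln (ratio i (U \<omega> i, T \<omega>, Z \<omega>)))
           \<le> joint_ratio (T \<omega>, Z \<omega>, U \<omega>) + 1 / weight (T \<omega>) (Z \<omega>) / zs_factor + ln zs_factor - 2"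
proof -
  define q where "q = weight (T \<omega>) (Z \<omega>)"
  have "0 < q" using weight_pos[OF \<omega>] by (simp add: q_def)
  have "(\<Sum>i<m. ln (ratio i (U \<omega> i, T \<omega>, Z \<omega>))) = ln (\<Prod>i<m. ratio i (U \<omega> i, T \<omega>, Z \<omega>))"
    using ratio_pos[OF \<omega>] by (subst ln_prod) (auto dest: less_imp_neq[symmetric])
  also have "\<dots> = ln (joint_ratio (T \<omega>, Z \<omega>, U \<omega>)) - ln q"
  proof -
    have "0 < (\<Prod>i<m. ratio i (U \<omega> i, T \<omega>, Z \<omega>))"
      by (rule prod_pos) (use ratio_pos[OF \<omega>] in auto)
    then show ?thesis using ln_mult_pos[OF _ \<open>0 < q\<close>] by (simp add: joint_ratio_def q_def)
  qed
  finally have sum_eq: "(\<Sum>i<m. ln (ratio i (U \<omega> i, T \<omega>, Z \<omega>))) = ln (joint_ratio (T \<omega>, Z \<omega>, U \<omega>)) - ln q" .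
  have "ln (joint_ratio (T \<omega>, Z \<omega>, U \<omega>)) \<le> joint_ratio (T \<omega>, Z \<omega>, U \<omega>) - 1"
    using joint_ratio_pos[OF \<omega>] by (rule ln_le_minus_one)
  moreover have "- ln q \<le> ln zs_factor + 1 / q / zs_factor - 1"
  proof -
    have "ln (1 / q / zs_factor) \<le> 1 / q / zs_factor - 1"
      using \<open>0 < q\<close> zs_factor_ge_1 by (intro ln_le_minus_one) simp
    moreover have "ln (1 / q / zs_factor) = - ln q - ln zs_factor"
      using \<open>0 < q\<close> zs_factor_ge_1 by (simp add: ln_div ln_mult)
    ultimately show ?thesis by simp
  qed
  ultimately show ?thesis unfolding sum_eq q_def by linarith
qed

lemma inv_ratio_integrable: "integrable P (\<lambda>\<omega>. 1 / ratio i (U \<omega> i, T \<omega>, Z \<omega>))"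
  using nn_integral_inv_ratio by (intro integral_le_of_nn_integral_le[where c=1] AE_pmfI)
    (auto simp: ratio_def)

lemma inv_weight_integrable: "integrable P (\<lambda>\<omega>. 1 / weight (T \<omega>) (Z \<omega>))"
  and integral_inv_weight_le: "(\<integral>\<omega>. 1 / weight (T \<omega>) (Z \<omega>) \<partial>P) \<le> zs_factor"
  using integral_le_of_nn_integral_le[OF AE_pmfI nn_integral_inv_weight] weight_pos zs_factor_ge_1
  by (auto simp: less_imp_le)

lemma joint_ratio_integrable: "integrable P (\<lambda>\<omega>. joint_ratio (T \<omega>, Z \<omega>, U \<omega>))"
  and integral_joint_ratio_le: "(\<integral>\<omega>. joint_ratio (T \<omega>, Z \<omega>, U \<omega>) \<partial>P) \<le> 1"
proof -
  have "AE \<omega> in P. 0 \<le> joint_ratio (T \<omega>, Z \<omega>, U \<omega>)"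
    using joint_ratio_pos by (intro AE_pmfI) (simp add: less_imp_le)
  then show "integrable P (\<lambda>\<omega>. joint_ratio (T \<omega>, Z \<omega>, U \<omega>))"
    and "(\<integral>\<omega>. joint_ratio (T \<omega>, Z \<omega>, U \<omega>) \<partial>P) \<le> 1"
    using integral_le_of_nn_integral_le[of _ P 1] nn_integral_joint_ratio by simp_all
qed

lemma abs_ln_ratio_le:
  assumes \<omega>: "\<omega> \<in> set_pmf P" and "i < m"
  shows "\<bar>ln (ratio i (U \<omega> i, T \<omega>, Z \<omega>))\<bar>
           \<le> joint_ratio (T \<omega>, Z \<omega>, U \<omega>) + 1 / weight (T \<omega>) (Z \<omega>) / zs_factor + ln zs_factor
             + 2 * (\<Sum>j<m. 1 / ratio j (U \<omega> j, T \<omega>, Z \<omega>))"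
proof -
  define L where "L j = ln (ratio j (U \<omega> j, T \<omega>, Z \<omega>))" for j
  define R where "R j = 1 / ratio j (U \<omega> j, T \<omega>, Z \<omega>)" for j
  have neg_L: "- L j \<le> R j" if "j < m" for j
    using ln_le_minus_one[of "R j"] ratio_pos[OF \<omega> that] by (simp add: L_def R_def ln_div)
  have R_nonneg: "0 \<le> R j" if "j < m" for j using ratio_pos[OF \<omega> that] by (simp add: R_def)
  have "(\<Sum>j<m. L j) = L i + (\<Sum>j\<in>{..<m} - {i}. L j)"
    using \<open>i < m\<close> by (subst sum.remove[of "{..<m}" i]) auto
  moreover have "- (\<Sum>j\<in>{..<m} - {i}. L j) \<le> (\<Sum>j<m. R j)"
  proof -
    have "- (\<Sum>j\<in>{..<m} - {i}. L j) \<le> (\<Sum>j\<in>{..<m} - {i}. R j)"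
      unfolding sum_negf[symmetric] by (intro sum_mono neg_L) auto
    also have "\<dots> \<le> (\<Sum>j<m. R j)" using R_nonneg by (intro sum_mono2) auto
    finally show ?thesis .
  qed
  moreover have "R i \<le> (\<Sum>j<m. R j)" using \<open>i < m\<close> R_nonneg by (intro member_le_sum) auto
  moreover have "0 \<le> joint_ratio (T \<omega>, Z \<omega>, U \<omega>)" "0 \<le> 1 / weight (T \<omega>) (Z \<omega>) / zs_factor"
    "0 \<le> ln zs_factor"
    using joint_ratio_pos[OF \<omega>] weight_pos[OF \<omega>] zs_factor_ge_1 by auto
  ultimately show ?thesis
    using sum_ln_ratio_le[OF \<omega>] neg_L[OF \<open>i < m\<close>] R_nonneg[OF \<open>i < m\<close>] unfolding L_def R_def abs_le_iff
    by (intro conjI) linarith+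
qed

lemma ln_ratio_integrable:
  assumes "i < m"
  shows "integrable P (\<lambda>\<omega>. ln (ratio i (U \<omega> i, T \<omega>, Z \<omega>)))"
proof (rule Bochner_Integration.integrable_bound)
  show "integrable P (\<lambda>\<omega>. joint_ratio (T \<omega>, Z \<omega>, U \<omega>) + 1 / weight (T \<omega>) (Z \<omega>) / zs_factor
          + ln zs_factor + 2 * (\<Sum>j<m. 1 / ratio j (U \<omega> j, T \<omega>, Z \<omega>)))"
    by (intro Bochner_Integration.integrable_add Bochner_Integration.integrable_sum
          integrable_mult_right integrable_divide joint_ratio_integrable inv_weight_integrable
          inv_ratio_integrable measure_pmf.integrable_const)
  show "AE \<omega> in P. norm (ln (ratio i (U \<omega> i, T \<omega>, Z \<omega>)))
          \<le> norm (joint_ratio (T \<omega>, Z \<omega>, U \<omega>) + 1 / weight (T \<omega>) (Z \<omega>) / zs_factor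
               + ln zs_factor + 2 * (\<Sum>j<m. 1 / ratio j (U \<omega> j, T \<omega>, Z \<omega>)))"
    using abs_ln_ratio_le[OF _ assms] by (intro AE_pmfI) (auto intro: order_trans[OF _ abs_ge_self])
qed simp

lemma tvd_sq_le_integral_ln_ratio:
  assumes "i < m"
  shows "(tvd (law i) (kernel_law i))\<^sup>2 \<le> (\<integral>\<omega>. ln (ratio i (U \<omega> i, T \<omega>, Z \<omega>)) \<partial>P)"
proof -
  have "(tvd (law i) (kernel_law i))\<^sup>2 \<le> (\<integral>v. ln (ratio i v) \<partial>law i)"
    unfolding ratio_def
  proof (rule tvd_sq_le_kl)
    show "0 < pmf (kernel_law i) v" if "v \<in> set_pmf (law i)" for v
      using that ratio_pos[OF _ assms] law_pos by (auto simp: law_def ratio_def zero_less_divide_iff)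
    show "integrable (law i) (\<lambda>v. ln (pmf (law i) v / pmf (kernel_law i) v))"
      using ln_ratio_integrable[OF assms] by (simp add: law_def ratio_def)
  qed
  also have "\<dots> = (\<integral>\<omega>. ln (ratio i (U \<omega> i, T \<omega>, Z \<omega>)) \<partial>P)"
    by (simp add: law_def)
  finally show ?thesis .
qed

theorem sum_tvd_sq_le:
  "(\<Sum>i<m. (tvd (map_pmf (\<lambda>\<omega>. (U \<omega> i, T \<omega>, Z \<omega>)) (cond_pmf Q E))
                 (bind_pmf (map_pmf (\<lambda>\<omega>. (T \<omega>, Z \<omega>)) (cond_pmf Q E))
                    (\<lambda>(t, z). map_pmf (\<lambda>u. (u, t, z)) (\<kappa> i t))))\<^sup>2)
     \<le> ln (card Zs / measure_pmf.prob Q E)"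
proof -
  define J where "J \<omega> = joint_ratio (T \<omega>, Z \<omega>, U \<omega>)" for \<omega>
  define V where "V \<omega> = 1 / weight (T \<omega>) (Z \<omega>)" for \<omega>
  have int: "integrable P J" "integrable P (\<lambda>\<omega>. V \<omega> / zs_factor)"
    unfolding J_def V_def by (rule joint_ratio_integrable, rule integrable_divide, rule inv_weight_integrable)
  have "(\<Sum>i<m. (tvd (law i) (kernel_law i))\<^sup>2) \<le> (\<Sum>i<m. \<integral>\<omega>. ln (ratio i (U \<omega> i, T \<omega>, Z \<omega>)) \<partial>P)"
    by (intro sum_mono tvd_sq_le_integral_ln_ratio) simp
  also have "\<dots> = (\<integral>\<omega>. (\<Sum>i<m. ln (ratio i (U \<omega> i, T \<omega>, Z \<omega>))) \<partial>P)"
    by (intro Bochner_Integration.integral_sum[symmetric] ln_ratio_integrable) simp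
  also have "\<dots> \<le> (\<integral>\<omega>. J \<omega> + V \<omega> / zs_factor + ln zs_factor - 2 \<partial>P)"
    using sum_ln_ratio_le int unfolding J_def[symmetric] V_def[symmetric]
    by (intro integral_mono_AE AE_pmfI Bochner_Integration.integrable_sum
          Bochner_Integration.integrable_add Bochner_Integration.integrable_diff
          ln_ratio_integrable measure_pmf.integrable_const) auto
  also have "\<dots> = (\<integral>\<omega>. J \<omega> \<partial>P) + (\<integral>\<omega>. V \<omega> \<partial>P) / zs_factor + ln zs_factor - 2"
    using int by (simp add: Bochner_Integration.integral_add Bochner_Integration.integral_diff
          integral_divide_zero Bochner_Integration.integrable_add del: times_divide_eq_right)
  also have "\<dots> \<le> 1 + zs_factor / zs_factor + ln zs_factor - 2"
    using integral_joint_ratio_le integral_inv_weight_le zs_factor_ge_1 unfolding J_def V_def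
    by (intro add_mono diff_mono divide_right_mono) auto
  also have "\<dots> = ln zs_factor" using zs_factor_ge_1 by simp
  finally show ?thesis by (simp add: law_def kernel_law_def joint_TZ_def zs_factor_def)
qed

end

lemma (in kl_chain) sum_tvd_sq_le_image:
  assumes "\<And>i. i < m \<Longrightarrow> A i = map_pmf (g i) (map_pmf (\<lambda>\<omega>. (U \<omega> i, T \<omega>, Z \<omega>)) (cond_pmf Q E))"
    and "\<And>i. i < m \<Longrightarrow> B i = map_pmf (g i) (bind_pmf (map_pmf (\<lambda>\<omega>. (T \<omega>, Z \<omega>)) (cond_pmf Q E))
                                   (\<lambda>(t, z). map_pmf (\<lambda>u. (u, t, z)) (\<kappa> i t)))"
  shows "(\<Sum>i<m. (tvd (A i) (B i))\<^sup>2) \<le> ln (card Zs / measure_pmf.prob Q E)"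
  using assms
  by (intro order_trans[OF sum_mono sum_tvd_sq_le] power_mono tvd_nonneg) (simp add: tvd_map_pmf_le)

subsection \<open>Independent rounds\<close>

abbreviation round_sample :: "nat \<Rightarrow> nat \<Rightarrow> 'a pmf \<Rightarrow> 'b pmf \<Rightarrow> ((nat \<Rightarrow> 'a) \<times> (nat \<Rightarrow> 'b)) pmf" where
  "round_sample n m \<mu> \<rho> \<equiv> pair_pmf (Pi_pmf {..<n} undefined (\<lambda>_. \<mu>)) (Pi_pmf {..<m} undefined (\<lambda>_. \<rho>))"

lemma measure_pair_pmf_times:
  "measure_pmf.prob (pair_pmf M N) {\<omega>. fst \<omega> \<in> S1 \<and> snd \<omega> \<in> S2}
     = measure_pmf.prob M S1 * measure_pmf.prob N S2"
proof -
  have "measure_pmf.prob (pair_pmf M N) {\<omega>. fst \<omega> \<in> S1 \<and> snd \<omega> \<in> S2}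
          = measure_pmf.prob (pair_pmf M N) ((S1 \<inter> set_pmf M) \<times> (S2 \<inter> set_pmf N))"
    by (subst measure_Int_set_pmf[symmetric]) (auto intro: arg_cong[where f="measure_pmf.prob _"])
  also have "\<dots> = measure_pmf.prob M (S1 \<inter> set_pmf M) * measure_pmf.prob N (S2 \<inter> set_pmf N)"
    by (rule measure_pmf_prob_product) (auto intro: countable_subset)
  also have "\<dots> = measure_pmf.prob M S1 * measure_pmf.prob N S2" by (simp add: measure_Int_set_pmf)
  finally show ?thesis .
qed

lemma measure_Pi_pmf_pointwise:
  assumes "finite A"
  shows "measure_pmf.prob (Pi_pmf A dflt p) {f. \<forall>i. f i \<in> B i}
     = (if \<forall>i. i \<notin> A \<longrightarrow> dflt \<in> B i then \<Prod>i\<in>A. measure_pmf.prob (p i) (B i) else 0)"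
proof -
  let ?M = "Pi_pmf A dflt p"
  have dflt: "f i = dflt" if "f \<in> set_pmf ?M" "i \<notin> A" for f i
    using that set_Pi_pmf_subset[OF assms, of dflt p] by (auto simp: PiE_dflt_def)
  show ?thesis
  proof (cases "\<forall>i. i \<notin> A \<longrightarrow> dflt \<in> B i")
    case True
    have eq: "{f. \<forall>i. f i \<in> B i} \<inter> set_pmf ?M = Pi A B \<inter> set_pmf ?M"
    proof (intro equalityI subsetI)
      fix f assume f: "f \<in> Pi A B \<inter> set_pmf ?M"
      have "f i \<in> B i" for i
        using f True dflt[of f i] by (cases "i \<in> A") auto
      then show "f \<in> {f. \<forall>i. f i \<in> B i} \<inter> set_pmf ?M" using f by blast
    qed blast
    have "measure_pmf.prob ?M {f. \<forall>i. f i \<in> B i} = measure_pmf.prob ?M ({f. \<forall>i. f i \<in> B i} \<inter> set_pmf ?M)"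
      by (rule measure_Int_set_pmf[symmetric])
    also have "\<dots> = measure_pmf.prob ?M (Pi A B)" unfolding eq by (rule measure_Int_set_pmf)
    finally show ?thesis using True measure_Pi_pmf_Pi[OF assms] by simp
  next
    case False
    then obtain i where "i \<notin> A" "dflt \<notin> B i" by blast
    then have eq: "{f. \<forall>i. f i \<in> B i} \<inter> set_pmf ?M = {}" using dflt by blast
    have "measure_pmf.prob ?M {f. \<forall>i. f i \<in> B i} = measure_pmf.prob ?M ({f. \<forall>i. f i \<in> B i} \<inter> set_pmf ?M)"
      by (rule measure_Int_set_pmf[symmetric])
    then show ?thesis unfolding eq using False by (simp only: if_False measure_empty)
  qed
qed

lemma measure_round_sample_rect:
  "measure_pmf.prob (round_sample n m \<mu> \<rho>) {\<omega>. (\<forall>i. fst \<omega> i \<in> B1 i) \<and> (\<forall>i. snd \<omega> i \<in> B2 i)}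
     = (if \<forall>i. n \<le> i \<longrightarrow> undefined \<in> B1 i then \<Prod>i<n. measure_pmf.prob \<mu> (B1 i) else 0)
       * (if \<forall>i. m \<le> i \<longrightarrow> undefined \<in> B2 i then \<Prod>i<m. measure_pmf.prob \<rho> (B2 i) else 0)"
  using measure_pair_pmf_times[of "Pi_pmf {..<n} undefined (\<lambda>_. \<mu>)" "Pi_pmf {..<m} undefined (\<lambda>_. \<rho>)"
      "{f. \<forall>i. f i \<in> B1 i}" "{f. \<forall>i. f i \<in> B2 i}"]
  by (simp add: measure_Pi_pmf_pointwise not_less)

lemma measure_round_sample_round:
  assumes "i < m" "m \<le> n"
  shows "measure_pmf.prob (round_sample n m \<mu> \<rho>) {\<omega>. fst \<omega> i \<in> S1 \<and> snd \<omega> i \<in> S2}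
           = measure_pmf.prob \<mu> S1 * measure_pmf.prob \<rho> S2"
proof -
  have "{\<omega>. fst \<omega> i \<in> S1 \<and> snd \<omega> i \<in> S2 :: bool}
          = {\<omega>. (\<forall>j. fst \<omega> j \<in> (if j = i then S1 else UNIV)) \<and> (\<forall>j. snd \<omega> j \<in> (if j = i then S2 else UNIV))}"
    by auto
  moreover have "(\<Prod>j<n. measure_pmf.prob \<mu> (if j = i then S1 else UNIV)) = measure_pmf.prob \<mu> S1"
    using assms by (simp add: if_distrib prod.If_cases Int_absorb1 subset_iff)
  moreover have "(\<Prod>j<m. measure_pmf.prob \<rho> (if j = i then S2 else UNIV)) = measure_pmf.prob \<rho> S2"
    using assms by (simp add: if_distrib prod.If_cases Int_absorb1 subset_iff)
  ultimately show ?thesis using assms by (simp add: measure_round_sample_rect)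
qed

lemma map_round_sample_round:
  assumes "i < m" "m \<le> n"
  shows "map_pmf (\<lambda>w. (fst w i, snd w i)) (round_sample n m \<mu> \<rho>) = pair_pmf \<mu> \<rho>"
  using map_pair[of "\<lambda>f. f i" "\<lambda>f. f i" "Pi_pmf {..<n} undefined (\<lambda>_. \<mu>)" "Pi_pmf {..<m} undefined (\<lambda>_. \<rho>)"]
    assms
  by (simp add: case_prod_unfold Pi_pmf_component)

lemma le_mult_of_ratio:
  fixes x y c :: real
  assumes "0 \<le> x" "x \<le> y" "0 < y \<Longrightarrow> c = x / y"
  shows "x \<le> y * c"
proof (cases "0 < y")
  case False
  then have "y = 0" "x = 0" using assms(1,2) by linarith+
  then show ?thesis by simp
qed (use assms in simp)

text \<open>The events \<open>T = t\<close> and \<open>T = t, U = u\<close> are rectangles, and \<open>\<kappa> i t\<close> is the conditional law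
  read off from round \<open>i\<close>; a zero denominator makes that round's constraint vacuous.\<close>
lemma round_sample_cond_indep:
  fixes T :: "(nat \<Rightarrow> 'a) \<times> (nat \<Rightarrow> 'b) \<Rightarrow> 't" and U :: "(nat \<Rightarrow> 'a) \<times> (nat \<Rightarrow> 'b) \<Rightarrow> nat \<Rightarrow> 'u"
  assumes mn: "m \<le> n"
    and joint: "{\<omega>. T \<omega> = t \<and> U \<omega> = u} = {\<omega>. (\<forall>i. fst \<omega> i \<in> Ba i) \<and> (\<forall>i. snd \<omega> i \<in> Bb i)}"
    and marg: "{\<omega>. T \<omega> = t} = {\<omega>. (\<forall>i. fst \<omega> i \<in> Ba' i) \<and> (\<forall>i. snd \<omega> i \<in> Bb' i)}"
    and sub: "\<And>i. Ba i \<subseteq> Ba' i" "\<And>i. Bb i \<subseteq> Bb' i"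
    and kernel: "\<And>i. i < m \<Longrightarrow> 0 < measure_pmf.prob \<mu> (Ba' i) * measure_pmf.prob \<rho> (Bb' i) \<Longrightarrow>
                   pmf (\<kappa> i t) (u i) = measure_pmf.prob \<mu> (Ba i) * measure_pmf.prob \<rho> (Bb i)
                                        / (measure_pmf.prob \<mu> (Ba' i) * measure_pmf.prob \<rho> (Bb' i))"
  shows "measure_pmf.prob (round_sample n m \<mu> \<rho>) {\<omega>. T \<omega> = t \<and> U \<omega> = u}
           \<le> measure_pmf.prob (round_sample n m \<mu> \<rho>) {\<omega>. T \<omega> = t} * (\<Prod>i<m. pmf (\<kappa> i t) (u i))"
proof -
  let ?a = "\<lambda>i. measure_pmf.prob \<mu> (Ba i)" and ?a' = "\<lambda>i. measure_pmf.prob \<mu> (Ba' i)"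
  let ?b = "\<lambda>i. measure_pmf.prob \<rho> (Bb i)" and ?b' = "\<lambda>i. measure_pmf.prob \<rho> (Bb' i)"
  have round: "?a i * ?b i \<le> ?a' i * ?b' i * pmf (\<kappa> i t) (u i)" if "i < m" for i
    by (rule le_mult_of_ratio)
       (use sub kernel[OF that] in \<open>auto intro!: mult_mono measure_pmf.finite_measure_mono\<close>)
  have split: "(\<Prod>i<n. h i) = (\<Prod>i<m. h i) * (\<Prod>i\<in>{m..<n}. h i)" for h :: "nat \<Rightarrow> real"
  proof -
    have "(\<Prod>i<n. h i) = (\<Prod>i\<in>{..<m} \<union> {m..<n}. h i)" using mn by (intro prod.cong) auto
    also have "\<dots> = (\<Prod>i<m. h i) * (\<Prod>i\<in>{m..<n}. h i)" by (rule prod.union_disjoint) auto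
    finally show ?thesis .
  qed
  show ?thesis
  proof (cases "(\<forall>i. n \<le> i \<longrightarrow> undefined \<in> Ba i) \<and> (\<forall>i. m \<le> i \<longrightarrow> undefined \<in> Bb i)")
    case True
    then have outside: "\<forall>i. n \<le> i \<longrightarrow> undefined \<in> Ba' i" "\<forall>i. m \<le> i \<longrightarrow> undefined \<in> Bb' i"
      using sub by blast+
    have "(\<Prod>i<n. ?a i) * (\<Prod>i<m. ?b i) = (\<Prod>i<m. ?a i * ?b i) * (\<Prod>i\<in>{m..<n}. ?a i)"
      unfolding split prod.distrib by (simp add: algebra_simps)
    also have "\<dots> \<le> (\<Prod>i<m. ?a' i * ?b' i * pmf (\<kappa> i t) (u i)) * (\<Prod>i\<in>{m..<n}. ?a' i)"
    proof (rule mult_mono)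
      show "(\<Prod>i<m. ?a i * ?b i) \<le> (\<Prod>i<m. ?a' i * ?b' i * pmf (\<kappa> i t) (u i))"
        using round by (intro prod_mono) auto
      show "(\<Prod>i\<in>{m..<n}. ?a i) \<le> (\<Prod>i\<in>{m..<n}. ?a' i)"
        using sub by (intro prod_mono conjI measure_pmf.finite_measure_mono) auto
    qed (auto intro: prod_nonneg)
    also have "\<dots> = (\<Prod>i<n. ?a' i) * (\<Prod>i<m. ?b' i) * (\<Prod>i<m. pmf (\<kappa> i t) (u i))"
      unfolding split prod.distrib by (simp add: algebra_simps)
    finally show ?thesis
      unfolding joint marg measure_round_sample_rect using True outside by simp
  next
    case False
    then show ?thesis
      unfolding joint measure_round_sample_rect by (auto intro!: mult_nonneg_nonneg prod_nonneg)
  qed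
qed

subsection \<open>The three instances\<close>

definition anchor_mask :: "nat \<Rightarrow> (nat \<Rightarrow> 'x set) \<Rightarrow> (nat \<Rightarrow> 'x) \<Rightarrow> (nat \<Rightarrow> 'x option)" where
  "anchor_mask k Xp x = (\<lambda>t. if t < k then (if x t \<in> Xp t then None else Some (x t)) else None)"

lemma Yv_eq_anchor_mask: "Yv k Xp w i = anchor_mask k Xp (fst w i)"
  by (simp add: Yv_def anchor_mask_def)

text \<open>Instance (i): \<open>U\<close> is the round itself, \<open>T\<close> is trivial and \<open>\<kappa> i\<close> is the law of a round.\<close>
lemma sum_tvd_sq_round_le:
  fixes \<mu> :: "(nat \<Rightarrow> 'x) pmf" and \<rho> :: "nat set pmf" and Z :: "'x sample_pt \<Rightarrow> 'z" and n m :: nat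
  defines "Q \<equiv> round_sample n m \<mu> \<rho>"
  assumes mn: "m \<le> n" and E_pos: "0 < measure_pmf.prob Q E"
    and Zs: "finite Zs" "\<And>\<omega>. \<omega> \<in> set_pmf Q \<Longrightarrow> \<omega> \<in> E \<Longrightarrow> Z \<omega> \<in> Zs"
  shows "(\<Sum>i<m. (tvd (map_pmf (\<lambda>w. (Xv w i, Yv k Xp w i, Omv k Xp m n w i)) (cond_pmf Q E))
                      (map_pmf (\<lambda>w. (Xv w i, Yv k Xp w i, Omv k Xp m n w i)) Q))\<^sup>2)
         \<le> ln (card Zs / measure_pmf.prob Q E)"
proof -
  define U where "U \<omega> = (\<lambda>i. if i < m then (fst \<omega> i, snd \<omega> i) else undefined)" for \<omega> :: "'x sample_pt"
  define T where "T (\<omega> :: 'x sample_pt) = ()" for \<omega>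
  define \<kappa> where "\<kappa> (i :: nat) (t :: unit) = pair_pmf \<mu> \<rho>" for i t
  have "measure_pmf.prob Q {\<omega>. T \<omega> = t \<and> U \<omega> = u}
          \<le> measure_pmf.prob Q {\<omega>. T \<omega> = t} * (\<Prod>i<m. pmf (\<kappa> i t) (u i))" for t u
    unfolding Q_def
  proof (rule round_sample_cond_indep[OF mn,
        where Ba="\<lambda>i. if i < m then {fst (u i)} else {x. undefined = u i}"
          and Bb="\<lambda>i. if i < m then {snd (u i)} else UNIV" and Ba'="\<lambda>_. UNIV" and Bb'="\<lambda>_. UNIV"])
    show "{\<omega>. T \<omega> = t \<and> U \<omega> = u}
            = {\<omega>. (\<forall>i. fst \<omega> i \<in> (if i < m then {fst (u i)} else {x. undefined = u i}))
                 \<and> (\<forall>i. snd \<omega> i \<in> (if i < m then {snd (u i)} else UNIV))}"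
      by (auto simp: T_def U_def fun_eq_iff prod_eq_iff split: if_splits)
  qed (auto simp: T_def \<kappa>_def measure_pmf_single, metis pmf_pair prod.collapse)
  then interpret kl_chain Q E T Z U \<kappa> Zs m
    using E_pos Zs by unfold_locales (auto simp: U_def)
  define g where "g x = (\<lambda>(x :: nat \<Rightarrow> 'x, D). (x, anchor_mask k Xp x,
      (Inl (D, restrict (anchor_mask k Xp x) D) :: (nat set \<times> (nat \<Rightarrow> 'x option)) + (nat \<Rightarrow> 'x)))) (fst x)"
    for x :: "((nat \<Rightarrow> 'x) \<times> nat set) \<times> unit \<times> 'z"
  show ?thesis
  proof (rule sum_tvd_sq_le_image[where g="\<lambda>_. g"])
    fix i assume i: "i < m"
    show "map_pmf (\<lambda>w. (Xv w i, Yv k Xp w i, Omv k Xp m n w i)) (cond_pmf Q E)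
            = map_pmf g (map_pmf (\<lambda>\<omega>. (U \<omega> i, T \<omega>, Z \<omega>)) (cond_pmf Q E))"
      unfolding map_pmf_comp using i
      by (intro map_pmf_cong refl) (simp add: g_def U_def Xv_def Yv_eq_anchor_mask Omv_def)
    have "map_pmf g (bind_pmf (map_pmf (\<lambda>\<omega>. (T \<omega>, Z \<omega>)) (cond_pmf Q E))
            (\<lambda>(t, z). map_pmf (\<lambda>u. (u, t, z)) (\<kappa> i t)))
            = map_pmf (\<lambda>u. g (u, (), undefined)) (map_pmf (\<lambda>w. (fst w i, snd w i)) Q)"
      using i mn by (simp add: map_bind_pmf case_prod_unfold map_pmf_comp \<kappa>_def g_def Q_def
          map_round_sample_round)
    also have "\<dots> = map_pmf (\<lambda>w. (Xv w i, Yv k Xp w i, Omv k Xp m n w i)) Q"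
      unfolding map_pmf_comp using i
      by (intro map_pmf_cong refl) (simp add: g_def Xv_def Yv_eq_anchor_mask Omv_def)
    finally show "map_pmf (\<lambda>w. (Xv w i, Yv k Xp w i, Omv k Xp m n w i)) Q
                    = map_pmf g (bind_pmf (map_pmf (\<lambda>\<omega>. (T \<omega>, Z \<omega>)) (cond_pmf Q E))
                        (\<lambda>(t, z). map_pmf (\<lambda>u. (u, t, z)) (\<kappa> i t)))" ..
  qed
qed

lemma kl_chain_question_given_Y:
  fixes \<mu> :: "(nat \<Rightarrow> 'x) pmf" and \<rho> :: "nat set pmf" and Z :: "'x sample_pt \<Rightarrow> 'z" and n m :: nat
  defines "Q \<equiv> round_sample n m \<mu> \<rho>"
  assumes mn: "m \<le> n" and E_pos: "0 < measure_pmf.prob Q E"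
    and Zs: "finite Zs" "\<And>\<omega>. \<omega> \<in> set_pmf Q \<Longrightarrow> \<omega> \<in> E \<Longrightarrow> Z \<omega> \<in> Zs"
  shows "kl_chain Q E (\<lambda>\<omega>. (\<lambda>i. Yv k Xp \<omega> i, snd \<omega>, \<lambda>j. if j < m then undefined else fst \<omega> j)) Z
           (\<lambda>\<omega> i. if i < m then fst \<omega> i else undefined)
           (\<lambda>i t. cond_distr Q (\<lambda>w. Xv w i) (\<lambda>w. Yv k Xp w i) (fst t i)) Zs m"
proof (unfold_locales; (intro E_pos Zs)?)
  fix t :: "(nat \<Rightarrow> nat \<Rightarrow> 'x option) \<times> (nat \<Rightarrow> nat set) \<times> (nat \<Rightarrow> nat \<Rightarrow> 'x)" and u
  obtain y d c where t: "t = (y, d, c)" by (cases t) auto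
  define Ba' where "Ba' i = {x. anchor_mask k Xp x = y i \<and> (if i < m then undefined = c i else x = c i)}" for i
  define Ba where "Ba i = Ba' i \<inter> {x. if i < m then x = u i else undefined = u i}" for i
  show "measure_pmf.prob Q {\<omega>. (\<lambda>i. Yv k Xp \<omega> i, snd \<omega>, \<lambda>j. if j < m then undefined else fst \<omega> j) = t
                                \<and> (\<lambda>i. if i < m then fst \<omega> i else undefined) = u}
        \<le> measure_pmf.prob Q {\<omega>. (\<lambda>i. Yv k Xp \<omega> i, snd \<omega>, \<lambda>j. if j < m then undefined else fst \<omega> j) = t}
           * (\<Prod>i<m. pmf (cond_distr Q (\<lambda>w. Xv w i) (\<lambda>w. Yv k Xp w i) (fst t i)) (u i))"
    unfolding Q_def
  proof (rule round_sample_cond_indep[OF mn, where Ba=Ba and Bb="\<lambda>i. {d i}" and Ba'=Ba' and Bb'="\<lambda>i. {d i}"])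
    fix i assume i: "i < m"
      and pos: "0 < measure_pmf.prob \<mu> (Ba' i) * measure_pmf.prob \<rho> {d i}"
    have "Ba' i \<noteq> {}" using pos by auto
    then have Ba': "Ba' i = {x. anchor_mask k Xp x = y i}" and Ba: "Ba i = {x. anchor_mask k Xp x = y i \<and> x = u i}"
      using i by (auto simp: Ba'_def Ba_def)
    have "0 < measure_pmf.prob \<mu> (Ba' i)" "0 < measure_pmf.prob \<rho> {d i}"
      using pos by (simp_all add: zero_less_mult_iff)
    have round: "measure_pmf.prob (round_sample n m \<mu> \<rho>) {w. fst w i \<in> S} = measure_pmf.prob \<mu> S" for S
      using measure_round_sample_round[OF i mn, of \<mu> \<rho> S UNIV] by simp
    have "pmf (cond_distr (round_sample n m \<mu> \<rho>) (\<lambda>w. Xv w i) (\<lambda>w. Yv k Xp w i) (y i)) (u i)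
            = measure_pmf.prob \<mu> (Ba i) / measure_pmf.prob \<mu> (Ba' i)"
      using \<open>0 < measure_pmf.prob \<mu> (Ba' i)\<close>
      using round[of "Ba i"] round[of "Ba' i"]
      by (subst pmf_cond_distr) (auto simp: Ba Ba' Xv_def Yv_eq_anchor_mask conj_commute)
    then show "pmf (cond_distr (round_sample n m \<mu> \<rho>) (\<lambda>w. Xv w i) (\<lambda>w. Yv k Xp w i) (fst t i)) (u i)
                 = measure_pmf.prob \<mu> (Ba i) * measure_pmf.prob \<rho> {d i}
                   / (measure_pmf.prob \<mu> (Ba' i) * measure_pmf.prob \<rho> {d i})"
      using \<open>0 < measure_pmf.prob \<rho> {d i}\<close> by (simp add: t)
  qed (auto simp: t Ba_def Ba'_def fun_eq_iff Yv_eq_anchor_mask split: if_splits)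
qed auto

text \<open>Instance (ii): \<open>U\<close> collects the questions of the rounds in \<open>[m]\<close>, \<open>T\<close> everything else
  that \<open>\<Omega>\<^sub>-\<^sub>i\<close> and \<open>Y\<^sub>i\<close> can depend on.\<close>
lemma sum_tvd_sq_question_given_Y_le:
  fixes \<mu> :: "(nat \<Rightarrow> 'x) pmf" and \<rho> :: "nat set pmf" and Z :: "'x sample_pt \<Rightarrow> 'z" and n m :: nat
  defines "Q \<equiv> round_sample n m \<mu> \<rho>"
  assumes mn: "m \<le> n" and E_pos: "0 < measure_pmf.prob Q E"
    and Zs: "finite Zs" "\<And>\<omega>. \<omega> \<in> set_pmf Q \<Longrightarrow> \<omega> \<in> E \<Longrightarrow> Z \<omega> \<in> Zs"
  shows "(\<Sum>i<m. (tvd (map_pmf (\<lambda>w. (Xv w i, Yv k Xp w i, Z w, Omv_minus k Xp m n i w)) (cond_pmf Q E))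
                  (bind_pmf (map_pmf (\<lambda>w. (Yv k Xp w i, Z w, Omv_minus k Xp m n i w)) (cond_pmf Q E))
                     (\<lambda>(y, z, o'). map_pmf (\<lambda>x. (x, y, z, o'))
                         (cond_distr Q (\<lambda>w. Xv w i) (\<lambda>w. Yv k Xp w i) y))))\<^sup>2)
         \<le> ln (card Zs / measure_pmf.prob Q E)"
proof -
  define U where "U \<omega> = (\<lambda>i. if i < m then fst \<omega> i else undefined)" for \<omega> :: "'x sample_pt"
  define T where "T \<omega> = (\<lambda>i. Yv k Xp \<omega> i, snd \<omega>, \<lambda>j. if j < m then undefined else fst \<omega> j)"
    for \<omega> :: "'x sample_pt"
  define \<kappa> where "\<kappa> i t = cond_distr Q (\<lambda>w. Xv w i) (\<lambda>w. Yv k Xp w i) (fst t i)"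
    for i :: nat and t :: "(nat \<Rightarrow> nat \<Rightarrow> 'x option) \<times> (nat \<Rightarrow> nat set) \<times> (nat \<Rightarrow> nat \<Rightarrow> 'x)"
  interpret kl_chain Q E T Z U \<kappa> Zs m
    unfolding T_def U_def \<kappa>_def Q_def using assms by (intro kl_chain_question_given_Y) simp_all
  show ?thesis
  proof (rule sum_tvd_sq_le_image)
    fix i assume i: "i < m"
    define \<Omega> where "\<Omega> t = (\<lambda>j. if j = i then undefined else if j < m then Inl (fst (snd t) j, restrict (fst t j) (fst (snd t) j))
         else if j < n then Inr (snd (snd t) j) else undefined)"
      for t :: "(nat \<Rightarrow> nat \<Rightarrow> 'x option) \<times> (nat \<Rightarrow> nat set) \<times> (nat \<Rightarrow> nat \<Rightarrow> 'x)"
    have \<Omega>T: "\<Omega> (T w) = Omv_minus k Xp m n i w" and YT: "fst (T w) i = Yv k Xp w i" for w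
      by (simp_all add: \<Omega>_def T_def Omv_minus_def Omv_def fun_eq_iff)
    define g where "g x = (fst x, fst (fst (snd x)) i, snd (snd x), \<Omega> (fst (snd x)))"
      for x :: "(nat \<Rightarrow> 'x) \<times> ((nat \<Rightarrow> nat \<Rightarrow> 'x option) \<times> (nat \<Rightarrow> nat set) \<times> (nat \<Rightarrow> nat \<Rightarrow> 'x)) \<times> 'z"
    show "map_pmf (\<lambda>w. (Xv w i, Yv k Xp w i, Z w, Omv_minus k Xp m n i w)) (cond_pmf Q E)
            = map_pmf g (map_pmf (\<lambda>\<omega>. (U \<omega> i, T \<omega>, Z \<omega>)) (cond_pmf Q E))"
      unfolding map_pmf_comp using i
      by (intro map_pmf_cong refl) (simp add: g_def U_def Xv_def \<Omega>T YT)
    have "map_pmf (\<lambda>w. (Yv k Xp w i, Z w, Omv_minus k Xp m n i w)) (cond_pmf Q E)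
            = map_pmf (\<lambda>x. (fst (fst x) i, snd x, \<Omega> (fst x))) (map_pmf (\<lambda>\<omega>. (T \<omega>, Z \<omega>)) (cond_pmf Q E))"
      unfolding map_pmf_comp by (intro map_pmf_cong refl) (simp add: \<Omega>T YT)
    then show "bind_pmf (map_pmf (\<lambda>w. (Yv k Xp w i, Z w, Omv_minus k Xp m n i w)) (cond_pmf Q E))
                 (\<lambda>(y, z, o'). map_pmf (\<lambda>x. (x, y, z, o')) (cond_distr Q (\<lambda>w. Xv w i) (\<lambda>w. Yv k Xp w i) y))
            = map_pmf g (bind_pmf (map_pmf (\<lambda>\<omega>. (T \<omega>, Z \<omega>)) (cond_pmf Q E))
                (\<lambda>(t, z). map_pmf (\<lambda>u. (u, t, z)) (\<kappa> i t)))"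
      by (simp add: bind_map_pmf map_bind_pmf map_pmf_comp case_prod_unfold g_def \<kappa>_def)
  qed
qed

lemma Omv_eq_iff:
  "Omv k Xp m n \<omega> j = s \<longleftrightarrow>
     fst \<omega> j \<in> {x. if j < m then (case s of Inl p \<Rightarrow> restrict (anchor_mask k Xp x) (fst p) = snd p | Inr _ \<Rightarrow> False)
                   else if j < n then Inr x = s else undefined = s}
     \<and> snd \<omega> j \<in> (if j < m then (case s of Inl p \<Rightarrow> {fst p} | Inr _ \<Rightarrow> UNIV) else UNIV)"
proof (cases "j < m")
  case True
  then have Omv_Inl: "Omv k Xp m n \<omega> j = Inl (snd \<omega> j, restrict (anchor_mask k Xp (fst \<omega> j)) (snd \<omega> j))"
    by (simp add: Omv_def Yv_eq_anchor_mask)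
  show ?thesis
  proof (cases s)
    case (Inl p)
    then show ?thesis using True unfolding Omv_Inl by (cases p) auto
  qed (simp add: Omv_Inl True)
qed (simp add: Omv_def)

lemma kl_chain_Y_given_Omega:
  fixes \<mu> :: "(nat \<Rightarrow> 'x) pmf" and \<rho> :: "nat set pmf" and Z :: "'x sample_pt \<Rightarrow> 'z" and n m :: nat
  defines "Q \<equiv> round_sample n m \<mu> \<rho>"
  assumes mn: "m \<le> n" and E_pos: "0 < measure_pmf.prob Q E"
    and Zs: "finite Zs" "\<And>\<omega>. \<omega> \<in> set_pmf Q \<Longrightarrow> \<omega> \<in> E \<Longrightarrow> Z \<omega> \<in> Zs"
  shows "kl_chain Q E (Omv k Xp m n) Z (\<lambda>\<omega> i. if i < m then Yv k Xp \<omega> i else undefined)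
           (\<lambda>i t. cond_distr Q (\<lambda>w. Yv k Xp w i) (\<lambda>w. Omv k Xp m n w i) (t i)) Zs m"
proof (unfold_locales; (intro E_pos Zs)?)
  fix t u
  define Ba' where "Ba' j = {x. if j < m then (case t j of Inl p \<Rightarrow> restrict (anchor_mask k Xp x) (fst p) = snd p
                                                   | Inr _ \<Rightarrow> False)
                             else if j < n then Inr x = t j else undefined = t j}" for j
  define Ba where "Ba j = Ba' j \<inter> {x. if j < m then anchor_mask k Xp x = u j else undefined = u j}" for j
  define Bb where "Bb j = (if j < m then (case t j of Inl p \<Rightarrow> {fst p} | Inr _ \<Rightarrow> UNIV) else UNIV)" for j
  have Omv_eq: "Omv k Xp m n \<omega> j = t j \<longleftrightarrow> fst \<omega> j \<in> Ba' j \<and> snd \<omega> j \<in> Bb j" for \<omega> j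
    unfolding Omv_eq_iff Ba'_def Bb_def ..
  show "measure_pmf.prob Q {\<omega>. Omv k Xp m n \<omega> = t \<and> (\<lambda>i. if i < m then Yv k Xp \<omega> i else undefined) = u}
        \<le> measure_pmf.prob Q {\<omega>. Omv k Xp m n \<omega> = t}
           * (\<Prod>i<m. pmf (cond_distr Q (\<lambda>w. Yv k Xp w i) (\<lambda>w. Omv k Xp m n w i) (t i)) (u i))"
    unfolding Q_def
  proof (rule round_sample_cond_indep[OF mn, where Ba=Ba and Bb=Bb and Ba'=Ba' and Bb'=Bb])
    show "{\<omega>. Omv k Xp m n \<omega> = t \<and> (\<lambda>i. if i < m then Yv k Xp \<omega> i else undefined) = u}
            = {\<omega>. (\<forall>i. fst \<omega> i \<in> Ba i) \<and> (\<forall>i. snd \<omega> i \<in> Bb i)}"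
      by (auto simp: fun_eq_iff Omv_eq Ba_def Yv_eq_anchor_mask)
    show "{\<omega>. Omv k Xp m n \<omega> = t} = {\<omega>. (\<forall>i. fst \<omega> i \<in> Ba' i) \<and> (\<forall>i. snd \<omega> i \<in> Bb i)}"
      by (auto simp: fun_eq_iff Omv_eq)
  next
    fix i assume i: "i < m"
    have round: "measure_pmf.prob (round_sample n m \<mu> \<rho>) {w. fst w i \<in> S1 \<and> snd w i \<in> S2}
                   = measure_pmf.prob \<mu> S1 * measure_pmf.prob \<rho> S2" for S1 S2
      by (rule measure_round_sample_round[OF i mn])
    assume "0 < measure_pmf.prob \<mu> (Ba' i) * measure_pmf.prob \<rho> (Bb i)"
    moreover have "{w. Yv k Xp w i = u i \<and> Omv k Xp m n w i = t i} = {w. fst w i \<in> Ba i \<and> snd w i \<in> Bb i}"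
      using i by (auto simp: Omv_eq Ba_def Yv_eq_anchor_mask)
    ultimately show "pmf (cond_distr (round_sample n m \<mu> \<rho>) (\<lambda>w. Yv k Xp w i) (\<lambda>w. Omv k Xp m n w i) (t i)) (u i)
                       = measure_pmf.prob \<mu> (Ba i) * measure_pmf.prob \<rho> (Bb i)
                         / (measure_pmf.prob \<mu> (Ba' i) * measure_pmf.prob \<rho> (Bb i))"
      by (subst pmf_cond_distr) (simp_all add: Omv_eq round)
  qed (auto simp: Ba_def)
qed auto

text \<open>Instance (iii): \<open>U\<close> collects the \<open>Y\<^sub>i\<close> of the rounds in \<open>[m]\<close> and \<open>T = \<Omega>\<close>.\<close>
lemma sum_tvd_sq_Y_given_Omega_le:
  fixes \<mu> :: "(nat \<Rightarrow> 'x) pmf" and \<rho> :: "nat set pmf" and Z :: "'x sample_pt \<Rightarrow> 'z" and n m :: nat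
  defines "Q \<equiv> round_sample n m \<mu> \<rho>"
  assumes mn: "m \<le> n" and E_pos: "0 < measure_pmf.prob Q E"
    and Zs: "finite Zs" "\<And>\<omega>. \<omega> \<in> set_pmf Q \<Longrightarrow> \<omega> \<in> E \<Longrightarrow> Z \<omega> \<in> Zs"
  shows "(\<Sum>i<m. (tvd (map_pmf (\<lambda>w. (Yv k Xp w i, Z w, Omv k Xp m n w)) (cond_pmf Q E))
                  (bind_pmf (map_pmf (\<lambda>w. (Z w, Omv k Xp m n w)) (cond_pmf Q E))
                     (\<lambda>(z, o'). map_pmf (\<lambda>y. (y, z, o'))
                         (cond_distr Q (\<lambda>w. Yv k Xp w i) (\<lambda>w. Omv k Xp m n w i) (o' i)))))\<^sup>2)
         \<le> ln (card Zs / measure_pmf.prob Q E)"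
proof -
  define U where "U \<omega> = (\<lambda>i. if i < m then Yv k Xp \<omega> i else undefined)" for \<omega> :: "'x sample_pt"
  define \<kappa> where "\<kappa> i t = cond_distr Q (\<lambda>w. Yv k Xp w i) (\<lambda>w. Omv k Xp m n w i) (t i)"
    for i :: nat and t :: "nat \<Rightarrow> (nat set \<times> (nat \<Rightarrow> 'x option)) + (nat \<Rightarrow> 'x)"
  interpret kl_chain Q E "Omv k Xp m n" Z U \<kappa> Zs m
    unfolding U_def \<kappa>_def Q_def using assms by (intro kl_chain_Y_given_Omega) simp_all
  define g where "g x = (fst x, snd (snd x), fst (snd x))"
    for x :: "(nat \<Rightarrow> 'x option) \<times> (nat \<Rightarrow> (nat set \<times> (nat \<Rightarrow> 'x option)) + (nat \<Rightarrow> 'x)) \<times> 'z"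
  show ?thesis
  proof (rule sum_tvd_sq_le_image[where g="\<lambda>_. g"])
    fix i assume i: "i < m"
    show "map_pmf (\<lambda>w. (Yv k Xp w i, Z w, Omv k Xp m n w)) (cond_pmf Q E)
            = map_pmf g (map_pmf (\<lambda>\<omega>. (U \<omega> i, Omv k Xp m n \<omega>, Z \<omega>)) (cond_pmf Q E))"
      unfolding map_pmf_comp using i by (intro map_pmf_cong refl) (simp add: g_def U_def)
    have "map_pmf (\<lambda>w. (Z w, Omv k Xp m n w)) (cond_pmf Q E)
            = map_pmf (\<lambda>x. (snd x, fst x)) (map_pmf (\<lambda>\<omega>. (Omv k Xp m n \<omega>, Z \<omega>)) (cond_pmf Q E))"
      unfolding map_pmf_comp by simp
    then show "bind_pmf (map_pmf (\<lambda>w. (Z w, Omv k Xp m n w)) (cond_pmf Q E))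
                 (\<lambda>(z, o'). map_pmf (\<lambda>y. (y, z, o'))
                    (cond_distr Q (\<lambda>w. Yv k Xp w i) (\<lambda>w. Omv k Xp m n w i) (o' i)))
            = map_pmf g (bind_pmf (map_pmf (\<lambda>\<omega>. (Omv k Xp m n \<omega>, Z \<omega>)) (cond_pmf Q E))
                (\<lambda>(t, z). map_pmf (\<lambda>u. (u, t, z)) (\<kappa> i t)))"
      by (simp add: bind_map_pmf map_bind_pmf map_pmf_comp case_prod_unfold g_def \<kappa>_def)
  qed
qed

subsection \<open>Averaging\<close>

lemma mean_le_sqrt_of_sum_sq_le:
  fixes s :: "nat \<Rightarrow> real"
  assumes "0 < m" and sq: "(\<Sum>i<m. (s i)\<^sup>2) \<le> real m * \<delta>"
  shows "(\<Sum>i<m. s i) / real m \<le> sqrt \<delta>"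
proof (rule real_le_rsqrt)
  have "(\<Sum>i<m. s i)\<^sup>2 \<le> (\<Sum>i<m. (s i)\<^sup>2) * real m"
    using sum_squared_le_sum_of_squares[of s "{..<m}"] by simp
  also have "\<dots> \<le> real m * \<delta> * real m" using sq by (intro mult_right_mono) auto
  finally show "((\<Sum>i<m. s i) / real m)\<^sup>2 \<le> \<delta>"
    using assms(1) by (simp add: power_divide field_simps power2_eq_square)
qed

lemma ln_le_log2: "1 \<le> (x :: real) \<Longrightarrow> ln x \<le> log 2 x"
  using ln_ge_zero[of x] ln_le_minus_one[of 2] ln_gt_zero[of 2]
  by (simp add: log_def le_divide_eq mult_left_le)

lemma ln_card_answers_over_prob_le:
  fixes p :: real and k m n :: nat
  assumes "1 \<le> (\<Prod>t<k. card (As t))" "0 < p" "p \<le> 1"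
  shows "ln (card (PiE {m..<n} (\<lambda>_. PiE {..<k} As)) / p)
           \<le> real (n - m) * log 2 (real (\<Prod>t<k. card (As t))) + log 2 (1 / p)"
proof -
  define a where "a = (\<Prod>t<k. card (As t))"
  have "card (PiE {..<k} As) = a" by (simp add: a_def card_PiE)
  then have card: "card (PiE {m..<n} (\<lambda>_. PiE {..<k} As)) = a ^ (n - m)" by (simp add: card_PiE)
  have "1 \<le> a" using assms(1) by (simp only: a_def)
  then have "1 \<le> real (a ^ (n - m))" by (simp add: one_le_power)
  then have "1 \<le> real (a ^ (n - m)) / p" using assms(2,3) by (simp add: le_divide_eq)
  then have "ln (real (a ^ (n - m)) / p) \<le> log 2 (real (a ^ (n - m)) / p)" by (rule ln_le_log2)
  also have "\<dots> = real (n - m) * log 2 (real a) + log 2 (1 / p)"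
    using assms(2) \<open>1 \<le> a\<close> by (simp add: log_divide log_nat_power)
  finally show ?thesis by (simp only: card a_def)
qed

lemma sample_eq_round_sample:
  "sample k n m \<mu> = round_sample n m \<mu> (pmf_of_set {S. S \<subseteq> {..<k} \<and> card S = k - 1})"
  by (simp add: sample_def)

lemma answers_in_answer_set:
  assumes "set_pmf \<mu> \<subseteq> PiE {..<k} Xs"
    and strat: "\<forall>t<k. \<forall>q. (\<forall>i<n. q i \<in> Xs t) \<longrightarrow> (\<forall>i<n. f t q i \<in> As t)"
    and "\<omega> \<in> set_pmf (sample k n m \<mu>)"
  shows "Zv k f m n \<omega> \<in> PiE {m..<n} (\<lambda>_. PiE {..<k} As)"
proof -
  have "fst \<omega> i \<in> set_pmf \<mu>" if "i < n" for i
    using assms(3) that by (auto simp: sample_def set_Pi_pmf PiE_dflt_def)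
  then have "fst \<omega> i t \<in> Xs t" if "i < n" "t < k" for i t
    using assms(1) that by (auto simp: PiE_def Pi_def)
  then have "f t (\<lambda>i. fst \<omega> i t) j \<in> As t" if "j \<in> {m..<n}" "t < k" for j t
    using strat that by auto
  then show ?thesis by (auto simp: Zv_def Av_def PiE_def Pi_def extensional_def)
qed

lemma prod_card_answers_ge_1:
  assumes "set_pmf \<mu> \<subseteq> PiE {..<k} Xs" "\<forall>t<k. finite (As t)" "0 < n"
    and strat: "\<forall>t<k. \<forall>q. (\<forall>i<n. q i \<in> Xs t) \<longrightarrow> (\<forall>i<n. f t q i \<in> As t)"
  shows "1 \<le> (\<Prod>t<k. card (As t))"
proof -
  obtain x where x: "x \<in> set_pmf \<mu>" using set_pmf_not_empty[of \<mu>] by blast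
  have "f t (\<lambda>i. x t) 0 \<in> As t" if "t < k" for t
    using x assms(1,3) strat that by (auto simp: PiE_def Pi_def)
  then have "1 \<le> card (As t)" if "t < k" for t
    using assms(2) that by (auto simp: Suc_le_eq card_gt_0_iff)
  then show ?thesis by (metis lessThan_iff prod_ge_1)
qed
theorem lemma4p3:
  fixes k n m :: nat
    and Xs Xp :: "nat \<Rightarrow> 'x set"
    and As :: "nat \<Rightarrow> 'a set"
    and \<mu> :: "(nat \<Rightarrow> 'x) pmf"
    and V :: "(nat \<Rightarrow> 'x) \<Rightarrow> (nat \<Rightarrow> 'a) \<Rightarrow> bool"
    and \<alpha> :: real
    and f :: "nat \<Rightarrow> (nat \<Rightarrow> 'x) \<Rightarrow> (nat \<Rightarrow> 'a)"
  assumes k: "1 \<le> k"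
    and As_fin: "\<forall>t<k. finite (As t)"
    and anch: "anchored k Xs \<mu> \<alpha> Xp"
    and m: "1 \<le> m" "m < n"
    and strat: "\<forall>t<k. \<forall>q. (\<forall>i<n. q i \<in> Xs t) \<longrightarrow> (\<forall>i<n. f t q i \<in> As t)"
    and W_pos: "measure_pmf.prob (sample k n m \<mu>) (Win k f V m n) > 0"
  shows
   "let P = sample k n m \<mu>;
        PW = cond_pmf P (Win k f V m n);
        \<delta> = (real (n - m) * log 2 (real (\<Prod>t<k. card (As t)))
              + log 2 (1 / measure_pmf.prob P (Win k f V m n))) / real m
    in
     (\<Sum>i<m. tvd (map_pmf (\<lambda>w. (Xv w i, Yv k Xp w i, Omv k Xp m n w i)) PW)
                  (map_pmf (\<lambda>w. (Xv w i, Yv k Xp w i, Omv k Xp m n w i)) P)) / real m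
       \<le> sqrt \<delta>
   \<and> (\<Sum>i<m. tvd (map_pmf (\<lambda>w. (Xv w i, Yv k Xp w i, Zv k f m n w, Omv_minus k Xp m n i w)) PW)
                  (bind_pmf (map_pmf (\<lambda>w. (Yv k Xp w i, Zv k f m n w, Omv_minus k Xp m n i w)) PW)
                     (\<lambda>(y, z, o'). map_pmf (\<lambda>x. (x, y, z, o'))
                         (cond_distr P (\<lambda>w. Xv w i) (\<lambda>w. Yv k Xp w i) y)))) / real m
       \<le> sqrt \<delta>
   \<and> (\<Sum>i<m. tvd (map_pmf (\<lambda>w. (Yv k Xp w i, Zv k f m n w, Omv k Xp m n w)) PW)
                  (bind_pmf (map_pmf (\<lambda>w. (Zv k f m n w, Omv k Xp m n w)) PW)
                     (\<lambda>(z, o'). map_pmf (\<lambda>y. (y, z, o'))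
                         (cond_distr P (\<lambda>w. Yv k Xp w i) (\<lambda>w. Omv k Xp m n w i) (o' i))))) / real m
       \<le> sqrt \<delta>"
proof -
  define \<rho> :: "nat set pmf" where "\<rho> = pmf_of_set {S. S \<subseteq> {..<k} \<and> card S = k - 1}"
  define W where "W = Win k f V m n"
  define Zs where "Zs = PiE {m..<n} (\<lambda>_. PiE {..<k} As)"
  define \<delta> where "\<delta> = (real (n - m) * log 2 (real (\<Prod>t<k. card (As t)))
                   + log 2 (1 / measure_pmf.prob (round_sample n m \<mu> \<rho>) W)) / real m"
  have P: "sample k n m \<mu> = round_sample n m \<mu> \<rho>" by (simp add: sample_eq_round_sample \<rho>_def)
  have W_pos': "0 < measure_pmf.prob (round_sample n m \<mu> \<rho>) W" using W_pos by (simp add: P W_def)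
  have supp: "set_pmf \<mu> \<subseteq> PiE {..<k} Xs" using anch by (simp add: anchored_def)
  have Zs: "finite Zs" "\<And>\<omega>. \<omega> \<in> set_pmf (round_sample n m \<mu> \<rho>) \<Longrightarrow> \<omega> \<in> W \<Longrightarrow> Zv k f m n \<omega> \<in> Zs"
    unfolding Zs_def using As_fin answers_in_answer_set[OF supp strat] by (auto simp: P intro!: finite_PiE)
  have "ln (card Zs / measure_pmf.prob (round_sample n m \<mu> \<rho>) W) \<le> real m * \<delta>"
    using ln_card_answers_over_prob_le[where m=m and n=n, OF prod_card_answers_ge_1[OF supp As_fin _ strat] W_pos'] m
    by (simp add: Zs_def \<delta>_def)
  have avg: "(\<Sum>i<m. s i) / real m \<le> sqrt \<delta>"
    if "(\<Sum>i<m. (s i)\<^sup>2) \<le> ln (card Zs / measure_pmf.prob (round_sample n m \<mu> \<rho>) W)" for s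
    using that m \<open>ln (card Zs / _) \<le> real m * \<delta>\<close> by (intro mean_le_sqrt_of_sum_sq_le) auto
  note instances = sum_tvd_sq_round_le[where Z="Zv k f m n"] sum_tvd_sq_question_given_Y_le sum_tvd_sq_Y_given_Omega_le
  show ?thesis
    unfolding Let_def W_def[symmetric] P
    using m W_pos' Zs by (intro conjI avg[unfolded \<delta>_def] instances) auto
qed

end
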